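(* Let $X=\{0,1\}$ and $k\ge2$. The classes $\mathcal A_k$ and $\mathcal R_k$ of aperiodic and of regular $k$-partitions of $X^\omega$ are each closed under the unary operations $q_0,\ldots,q_{k-1}$ and the binary operation $\cdot$.
   Context: $\mathcal R_k$ ($\mathcal A_k$): functions $X^\omega\to\bar k=\{0,\dots,k-1\}$ all of whose preimages are regular (aperiodic) $\omega$-languages (recognised by deterministic Muller acceptors, resp. with aperiodic automaton). Let $\tilde0=110000$, $\tilde1=110100$, $\tilde2=110010$ and $f:\{0,1,2\}^\omega\to\{0,1\}^\omega$, $f(x_0x_1\cdots)=\tilde x_0\tilde x_1\cdots$. For $A:X^\omega\to\bar k$ and $i<k$, $q_i(A)(\xi)=i$ if $\xi\notin f(\{0,1,2\}^\omega)$ or $\xi[n,n+6)=\tilde 2$ for infinitely many $n$; $q_i(A)(\xi)=A(\eta)$ if $\xi=f(\eta)$ with $\eta\in\{0,1\}^\omega$; $q_i(A)(\xi)=A(\eta)$ if $\xi=f(\sigma2\eta)$ with $\sigma\in\{0,1,2\}^*$ and $\eta\in\{0,1\}^\omega$. Let $g:X^\omega\to X^\omega$, $g(x_0x_1\cdots)=\tilde x_0\tilde2\tilde x_1\tilde2\cdots$ (and similarly on finite words). For $A,B:X^\omega\to\bar k$: $(A\cdot B)(\xi)=A(\eta)$ if $\xi=g(\eta)$; and $(A\cdot B)(\xi)=B(\eta)$ if $\xi=g(u)\,v\,\eta$ with $u\in X^*$, $\eta\in X^\omega$, and $v\in X^+$ the shortest word with $g(u)vX^\omega\cap g(X^\omega)=\emptyset$.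 *)

theory Defs
  imports Main "HOL-Library.Omega_Words_Fun"
begin

text \<open>Binary alphabet X = {0,1} is represented by type bool (1 = True, 0 = False).
  omega-words are 'a word = nat => 'a (HOL-Library.Omega_Words_Fun).\<close>

definition run :: "(nat \<Rightarrow> 'a \<Rightarrow> nat) \<Rightarrow> nat \<Rightarrow> 'a word \<Rightarrow> nat \<Rightarrow> nat" where
  "run \<delta> q0 \<xi> n = foldl \<delta> q0 (map \<xi> [0..<n])"

definition muller_recognises ::
  "nat set \<Rightarrow> nat \<Rightarrow> (nat \<Rightarrow> 'a \<Rightarrow> nat) \<Rightarrow> nat set set \<Rightarrow> 'a word set \<Rightarrow> bool" where
  "muller_recognises Q q0 \<delta> F L \<longleftrightarrow>
     finite Q \<and> q0 \<in> Q \<and> (\<forall>q\<in>Q. \<forall>a. \<delta> q a \<in> Q) \<and>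
     (\<forall>\<xi>. \<xi> \<in> L \<longleftrightarrow> {q. \<exists>\<^sub>\<infinity>n. run \<delta> q0 \<xi> n = q} \<in> F)"

definition aperiodic_trans :: "nat set \<Rightarrow> (nat \<Rightarrow> 'a \<Rightarrow> nat) \<Rightarrow> bool" where
  "aperiodic_trans Q \<delta> \<longleftrightarrow>
     (\<exists>m. \<forall>q\<in>Q. \<forall>w :: 'a list.
        foldl \<delta> q (concat (replicate m w)) = foldl \<delta> q (concat (replicate (Suc m) w)))"

definition regular_omega :: "'a word set \<Rightarrow> bool" where
  "regular_omega L \<longleftrightarrow> (\<exists>Q q0 \<delta> F. muller_recognises Q q0 \<delta> F L)"

definition aperiodic_omega :: "'a word set \<Rightarrow> bool" where
  "aperiodic_omega L \<longleftrightarrow>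
     (\<exists>Q q0 \<delta> F. muller_recognises Q q0 \<delta> F L \<and> aperiodic_trans Q \<delta>)"

definition Rk :: "nat \<Rightarrow> (bool word \<Rightarrow> nat) set" where
  "Rk k = {A. (\<forall>\<xi>. A \<xi> < k) \<and> (\<forall>i<k. regular_omega (A -` {i}))}"

definition Ak :: "nat \<Rightarrow> (bool word \<Rightarrow> nat) set" where
  "Ak k = {A. (\<forall>\<xi>. A \<xi> < k) \<and> (\<forall>i<k. aperiodic_omega (A -` {i}))}"

definition bit :: "bool \<Rightarrow> nat" where "bit b = (if b then 1 else 0)"

definition tl6 :: "nat \<Rightarrow> bool list" where
  "tl6 x = (if x = 0 then [True, True, False, False, False, False]
            else if x = 1 then [True, True, False, True, False, False]
            else [True, True, False, False, True, False])"

text \<open>f : {0,1,2}^omega -> {0,1}^omega (only applied to words with letters <= 2)\<close>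
definition fenc :: "nat word \<Rightarrow> bool word" where
  "fenc \<eta> n = tl6 (\<eta> (n div 6)) ! (n mod 6)"

definition ternary :: "nat word \<Rightarrow> bool" where
  "ternary \<eta> \<longleftrightarrow> (\<forall>j. \<eta> j \<le> 2)"

definition binary :: "nat word \<Rightarrow> bool" where
  "binary \<eta> \<longleftrightarrow> (\<forall>j. \<eta> j \<le> 1)"

text \<open>Words in {0,1}^omega (as nat words) correspond to bool words via bit.\<close>
definition qop :: "nat \<Rightarrow> (bool word \<Rightarrow> nat) \<Rightarrow> bool word \<Rightarrow> nat" where
  "qop i A \<xi> =
    (if \<xi> \<notin> fenc ` {\<eta>. ternary \<eta>} \<or> (\<exists>\<^sub>\<infinity>n. \<xi> [n \<rightarrow> n + 6] = tl6 2) then i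
     else if (\<exists>\<eta>. \<xi> = fenc (bit \<circ> \<eta>)) then A (THE \<eta>. \<xi> = fenc (bit \<circ> \<eta>))
     else A (THE \<eta>. \<exists>\<sigma>. set \<sigma> \<subseteq> {0,1,2} \<and> \<xi> = fenc ((\<sigma> @ [2]) \<frown> (bit \<circ> \<eta>))))"

text \<open>g(x0 x1 ...) = tilde x0 tilde 2 tilde x1 tilde 2 ..., on infinite and finite words\<close>
definition genc :: "bool word \<Rightarrow> bool word" where
  "genc \<eta> n = tl6 (if n mod 12 < 6 then bit (\<eta> (n div 12)) else 2) ! (n mod 6)"

definition genc_list :: "bool list \<Rightarrow> bool list" where
  "genc_list u = concat (map (\<lambda>x. tl6 (bit x) @ tl6 2) u)"

definition nonext :: "bool list \<Rightarrow> bool" where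
  "nonext p \<longleftrightarrow> (\<forall>\<eta>. genc \<eta> [0 \<rightarrow> length p] \<noteq> p)"

definition dot :: "(bool word \<Rightarrow> nat) \<Rightarrow> (bool word \<Rightarrow> nat) \<Rightarrow> bool word \<Rightarrow> nat" where
  "dot A B \<xi> =
    (if \<exists>\<eta>. \<xi> = genc \<eta> then A (THE \<eta>. \<xi> = genc \<eta>)
     else B (THE \<eta>. \<exists>u v. \<xi> = (genc_list u @ v) \<frown> \<eta> \<and> v \<noteq> [] \<and>
                nonext (genc_list u @ v) \<and>
                (\<forall>j. 0 < j \<and> j < length v \<longrightarrow> \<not> nonext (genc_list u @ take j v))))"

end

(* Every preimage of q_i(A) and of the product of A and B is recognised by a cascade: a fixed
   automaton checking the coding (d1 for f, d2 for g) drives Muller automata for preimages of A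
   and B, which receive the decoded letters and are restarted whenever the relevant suffix begins
   anew.  This gives regularity.  For aperiodicity, a cascade whose second component only performs
   letter actions of an aperiodic automaton or resets is again aperiodic, and d1, d2 are aperiodic
   because they check a cyclic pattern in which positions at different offsets read different
   short words. *)

theory Submission
  imports Defs "HOL-Library.Nat_Bijection"
begin

definition automaton :: "nat set \<Rightarrow> nat \<Rightarrow> (nat \<Rightarrow> 'a \<Rightarrow> nat) \<Rightarrow> bool" where
  "automaton Q q0 \<delta> \<longleftrightarrow> finite Q \<and> q0 \<in> Q \<and> (\<forall>q\<in>Q. \<forall>a. \<delta> q a \<in> Q)"

lemma muller_recognises_iff:
  "muller_recognises Q q0 \<delta> F L \<longleftrightarrow> automaton Q q0 \<delta> \<and> (\<forall>\<xi>. \<xi> \<in> L \<longleftrightarrow> limit (run \<delta> q0 \<xi>) \<in> F)"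
  unfolding muller_recognises_def automaton_def limit_def by auto

lemma run_0 [simp]: "run \<delta> q0 \<xi> 0 = q0"
  by (simp add: run_def)

lemma run_Suc [simp]: "run \<delta> q0 \<xi> (Suc n) = \<delta> (run \<delta> q0 \<xi> n) (\<xi> n)"
  by (simp add: run_def)

lemma run_add: "run \<delta> q0 \<xi> (n + m) = foldl \<delta> (run \<delta> q0 \<xi> n) (map \<xi> [n..<n + m])"
  by (induction m) auto

lemma foldl_closed: "\<forall>q\<in>Q. \<forall>a. \<delta> q a \<in> Q \<Longrightarrow> q \<in> Q \<Longrightarrow> foldl \<delta> q w \<in> Q"
  by (induction w arbitrary: q) auto

lemma run_in_states: "automaton Q q0 \<delta> \<Longrightarrow> run \<delta> q0 \<xi> n \<in> Q"
  unfolding automaton_def run_def by (auto intro: foldl_closed)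

lemma finite_range_run: "automaton Q q0 \<delta> \<Longrightarrow> finite (range (run \<delta> q0 \<xi>))"
  using run_in_states by (metis automaton_def finite_subset image_subset_iff)

lemma limit_comp_finite_range:
  assumes "finite (range r)"
  shows "limit (f \<circ> r) = f ` limit r"
proof -
  have "finite (range (f \<circ> r))"
    using finite_imageI [OF assms, of f] by (simp add: image_comp)
  then obtain k' where k': "limit (f \<circ> r) = range (suffix k' (f \<circ> r))"
    using limit_is_suffix by blast
  obtain k where k: "limit r = range (suffix k r)"
    using limit_is_suffix [OF assms] by blast
  let ?n = "max k k'"
  have "limit (f \<circ> r) = range (suffix ?n (f \<circ> r))"
    using limit_range_suffix_incr [OF k', of ?n] by simp
  also have "\<dots> = f ` range (suffix ?n r)"
    by (auto simp: suffix_def)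
  also have "\<dots> = f ` limit r"
    using limit_range_suffix_incr [OF k, of ?n] by simp
  finally show ?thesis .
qed

lemma limit_reindex:
  fixes g :: "nat \<Rightarrow> nat"
  assumes eq: "\<And>n. N \<le> n \<Longrightarrow> x n = y (g n)"
    and mono: "\<And>n. g n \<le> g (Suc n)" and step: "\<And>n. g (Suc n) \<le> Suc (g n)"
    and unbounded: "\<And>m. \<exists>n. m \<le> g n"
  shows "limit x = limit y"
proof (intro set_eqI iffI)
  have g_mono: "g n \<le> g n'" if "n \<le> n'" for n n'
    using lift_Suc_mono_le [of g, OF mono that] .
  have unit_steps: "\<bar>int (g (Suc n)) - int (g n)\<bar> \<le> 1" for n
    using mono [of n] step [of n] by linarith
  fix q
  {
    assume "q \<in> limit x"
    then have x_q: "\<forall>M. \<exists>n\<ge>M. x n = q"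
      by (simp add: limit_iff_frequent INFM_nat_le)
    have "\<exists>m\<ge>M. y m = q" for M
    proof -
      obtain n0 where "M \<le> g n0"
        using unbounded by blast
      moreover obtain n where "max N n0 \<le> n" "x n = q"
        using x_q by blast
      ultimately show ?thesis
        using eq [of n] g_mono [of n0 n] by (intro exI [of _ "g n"]) simp
    qed
    then show "q \<in> limit y"
      by (simp add: limit_iff_frequent INFM_nat_le)
  next
    assume "q \<in> limit y"
    then have y_q: "\<forall>M. \<exists>m\<ge>M. y m = q"
      by (simp add: limit_iff_frequent INFM_nat_le)
    have "\<exists>n\<ge>M. x n = q" for M
    proof -
      let ?a = "max M N"
      obtain m where m: "g ?a \<le> m" "y m = q"
        using y_q by blast
      obtain b0 where "m \<le> g b0"
        using unbounded by blast
      let ?b = "max ?a b0"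
      have "m \<le> g ?b"
        using \<open>m \<le> g b0\<close> g_mono [of b0 ?b] by simp
      \<comment> \<open>\<open>g\<close> moves in unit steps, so it takes every value between \<open>g ?a\<close> and \<open>g ?b\<close>\<close>
      have "\<exists>n. ?a \<le> n \<and> n \<le> ?b \<and> int (g n) = int m"
        using m(1) \<open>m \<le> g ?b\<close> unit_steps by (intro nat_intermed_int_val) auto
      then obtain n where "?a \<le> n" "g n = m"
        by auto
      then show ?thesis
        using eq [of n] m by (intro exI [of _ n]) simp
    qed
    then show "q \<in> limit x"
      by (simp add: limit_iff_frequent INFM_nat_le)
  }
qed

section \<open>Cascade products\<close>

text \<open>States are natural numbers, so a pair of states \<open>(d, b)\<close> is stored as \<open>prod_encode (d, b)\<close>.\<close>

definition cascade :: "(nat \<Rightarrow> 'a \<Rightarrow> nat) \<Rightarrow> (nat \<Rightarrow> 'a \<Rightarrow> nat \<Rightarrow> nat) \<Rightarrow> nat \<Rightarrow> 'a \<Rightarrow> nat" where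
  "cascade \<delta> \<tau> c a = (case prod_decode c of (d, b) \<Rightarrow> prod_encode (\<delta> d a, \<tau> d a b))"

fun cascade_run ::
  "(nat \<Rightarrow> 'a \<Rightarrow> nat) \<Rightarrow> nat \<Rightarrow> (nat \<Rightarrow> 'a \<Rightarrow> nat \<Rightarrow> nat) \<Rightarrow> nat \<Rightarrow> 'a word \<Rightarrow> nat \<Rightarrow> nat" where
  "cascade_run \<delta> d0 \<tau> b0 \<xi> 0 = b0"
| "cascade_run \<delta> d0 \<tau> b0 \<xi> (Suc n) = \<tau> (run \<delta> d0 \<xi> n) (\<xi> n) (cascade_run \<delta> d0 \<tau> b0 \<xi> n)"

lemma run_cascade:
  "run (cascade \<delta> \<tau>) (prod_encode (d0, b0)) \<xi> n = prod_encode (run \<delta> d0 \<xi> n, cascade_run \<delta> d0 \<tau> b0 \<xi> n)"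
  by (induction n) (simp_all add: cascade_def)

lemma automaton_cascade:
  assumes "automaton QD d0 \<delta>" "finite QB" "b0 \<in> QB"
    and "\<And>d a b. d \<in> QD \<Longrightarrow> b \<in> QB \<Longrightarrow> \<tau> d a b \<in> QB"
  shows "automaton (prod_encode ` (QD \<times> QB)) (prod_encode (d0, b0)) (cascade \<delta> \<tau>)"
  using assms unfolding automaton_def cascade_def by auto

lemma limit_run_cascade:
  assumes "automaton (prod_encode ` (QD \<times> QB)) (prod_encode (d0, b0)) (cascade \<delta> \<tau>)"
  shows "(fst \<circ> prod_decode) ` limit (run (cascade \<delta> \<tau>) (prod_encode (d0, b0)) \<xi>) = limit (run \<delta> d0 \<xi>)"
    and "(snd \<circ> prod_decode) ` limit (run (cascade \<delta> \<tau>) (prod_encode (d0, b0)) \<xi>) =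
      limit (cascade_run \<delta> d0 \<tau> b0 \<xi>)"
proof -
  let ?r = "run (cascade \<delta> \<tau>) (prod_encode (d0, b0)) \<xi>"
  have "finite (range ?r)"
    using assms by (rule finite_range_run)
  then have "limit ((fst \<circ> prod_decode) \<circ> ?r) = (fst \<circ> prod_decode) ` limit ?r"
    and "limit ((snd \<circ> prod_decode) \<circ> ?r) = (snd \<circ> prod_decode) ` limit ?r"
    by (rule limit_comp_finite_range)+
  moreover have "(fst \<circ> prod_decode) \<circ> ?r = run \<delta> d0 \<xi>"
    and "(snd \<circ> prod_decode) \<circ> ?r = cascade_run \<delta> d0 \<tau> b0 \<xi>"
    by (simp_all add: fun_eq_iff run_cascade)
  ultimately show "(fst \<circ> prod_decode) ` limit ?r = limit (run \<delta> d0 \<xi>)"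
    and "(snd \<circ> prod_decode) ` limit ?r = limit (cascade_run \<delta> d0 \<tau> b0 \<xi>)"
    by simp_all
qed

lemma cascade_muller_recognises:
  assumes "automaton QD d0 \<delta>" "finite QB" "b0 \<in> QB"
    and "\<And>d a b. d \<in> QD \<Longrightarrow> b \<in> QB \<Longrightarrow> \<tau> d a b \<in> QB"
  shows "muller_recognises (prod_encode ` (QD \<times> QB)) (prod_encode (d0, b0)) (cascade \<delta> \<tau>)
           {S. \<Phi> ((fst \<circ> prod_decode) ` S) ((snd \<circ> prod_decode) ` S)}
           {\<xi>. \<Phi> (limit (run \<delta> d0 \<xi>)) (limit (cascade_run \<delta> d0 \<tau> b0 \<xi>))}"
proof -
  have aut: "automaton (prod_encode ` (QD \<times> QB)) (prod_encode (d0, b0)) (cascade \<delta> \<tau>)"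
    using assms by (rule automaton_cascade)
  then show ?thesis
    unfolding muller_recognises_iff using limit_run_cascade [OF aut] by (simp del: comp_apply)
qed

section \<open>Aperiodic transition monoids\<close>

lemma foldl_concat_replicate:
  "foldl \<delta> q (concat (replicate n w)) = ((\<lambda>q. foldl \<delta> q w) ^^ n) q"
  by (induction n arbitrary: q) (simp_all add: funpow_swap1 [of "\<lambda>q. foldl \<delta> q w"])

lemma aperiodic_trans_iff:
  "aperiodic_trans Q \<delta> \<longleftrightarrow> (\<exists>m. \<forall>q\<in>Q. \<forall>w. ((\<lambda>q. foldl \<delta> q w) ^^ m) q = ((\<lambda>q. foldl \<delta> q w) ^^ Suc m) q)"
  unfolding aperiodic_trans_def foldl_concat_replicate ..

lemma funpow_stable:
  fixes f :: "'a \<Rightarrow> 'a"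
  assumes "(f ^^ Suc m) q = (f ^^ m) q" and "m \<le> n"
  shows "(f ^^ n) q = (f ^^ m) q"
  using assms(2)
proof (induction n rule: dec_induct)
  case (step n)
  have "(f ^^ Suc n) q = f ((f ^^ m) q)"
    using step.IH by simp
  also have "\<dots> = (f ^^ m) q"
    using assms(1) by simp
  finally show ?case .
qed simp

definition word_or_reset :: "nat set \<Rightarrow> (nat \<Rightarrow> 'a \<Rightarrow> nat) \<Rightarrow> (nat \<Rightarrow> nat) \<Rightarrow> bool" where
  "word_or_reset Q \<delta> f \<longleftrightarrow> (\<exists>w. \<forall>q\<in>Q. f q = foldl \<delta> q w) \<or> (\<exists>c\<in>Q. \<forall>q\<in>Q. f q = c)"

lemma word_or_reset_id: "word_or_reset Q \<delta> (\<lambda>q. q)"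
  unfolding word_or_reset_def by (metis foldl_Nil)

lemma word_or_reset_letter: "word_or_reset Q \<delta> (\<lambda>q. \<delta> q a)"
  unfolding word_or_reset_def by (metis foldl_Cons foldl_Nil)

lemma word_or_reset_const: "c \<in> Q \<Longrightarrow> word_or_reset Q \<delta> (\<lambda>q. c)"
  unfolding word_or_reset_def by blast

lemma word_or_reset_closed:
  "word_or_reset Q \<delta> f \<Longrightarrow> \<forall>q\<in>Q. \<forall>a. \<delta> q a \<in> Q \<Longrightarrow> q \<in> Q \<Longrightarrow> f q \<in> Q"
  unfolding word_or_reset_def using foldl_closed by metis

lemma word_or_reset_comp:
  assumes closed: "\<forall>q\<in>Q. \<forall>a. \<delta> q a \<in> Q"
    and f: "word_or_reset Q \<delta> f" and g: "word_or_reset Q \<delta> g"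
  shows "word_or_reset Q \<delta> (g \<circ> f)"
proof -
  have f_in: "f q \<in> Q" if "q \<in> Q" for q
    using word_or_reset_closed [OF f closed that] .
  from g consider (word) v where "\<forall>q\<in>Q. g q = foldl \<delta> q v"
    | (reset) c where "c \<in> Q" "\<forall>q\<in>Q. g q = c"
    unfolding word_or_reset_def by blast
  then show ?thesis
  proof cases
    case word
    from f consider (word') u where "\<forall>q\<in>Q. f q = foldl \<delta> q u"
      | (reset') c where "c \<in> Q" "\<forall>q\<in>Q. f q = c"
      unfolding word_or_reset_def by blast
    then show ?thesis
    proof cases
      case word'
      then have "\<forall>q\<in>Q. (g \<circ> f) q = foldl \<delta> q (u @ v)"
        using word f_in by simp
      then show ?thesis
        unfolding word_or_reset_def by blast
    next
      case reset'
      then show ?thesis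
        using word_or_reset_closed [OF g closed] unfolding word_or_reset_def by auto
    qed
  next
    case reset
    then show ?thesis
      using f_in unfolding word_or_reset_def by auto
  qed
qed

lemma funpow_cong_on:
  assumes "\<And>q. q \<in> Q \<Longrightarrow> f q = g q" and "\<And>q. q \<in> Q \<Longrightarrow> f q \<in> Q" and "p \<in> Q"
  shows "(f ^^ n) p = (g ^^ n) p"
  using assms(3)
proof (induction n arbitrary: p)
  case (Suc n)
  then have "(f ^^ n) (f p) = (g ^^ n) (g p)"
    using assms(1,2) by simp
  then show ?case
    by (simp add: funpow_swap1)
qed simp

lemma funpow_fixpoint: "f x = x \<Longrightarrow> (f ^^ n) x = x"
  by (induction n) simp_all

lemma word_or_reset_aperiodic:
  assumes closed: "\<forall>q\<in>Q. \<forall>a. \<delta> q a \<in> Q" and "aperiodic_trans Q \<delta>"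
  obtains m where "\<And>f q. word_or_reset Q \<delta> f \<Longrightarrow> q \<in> Q \<Longrightarrow> (f ^^ Suc m) q = (f ^^ m) q"
proof -
  obtain m where m: "\<forall>q\<in>Q. \<forall>w. ((\<lambda>q. foldl \<delta> q w) ^^ m) q = ((\<lambda>q. foldl \<delta> q w) ^^ Suc m) q"
    using assms(2) aperiodic_trans_iff by blast
  have "(f ^^ Suc (Suc m)) q = (f ^^ Suc m) q" if f: "word_or_reset Q \<delta> f" and q: "q \<in> Q" for f q
  proof -
    from f consider (word) w where "\<forall>q\<in>Q. f q = foldl \<delta> q w"
      | (reset) c where "c \<in> Q" "\<forall>q\<in>Q. f q = c"
      unfolding word_or_reset_def by blast
    then show ?thesis
    proof cases
      case word
      have f_word: "(f ^^ n) q = ((\<lambda>q. foldl \<delta> q w) ^^ n) q" for n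
        by (rule funpow_cong_on [OF _ _ q]) (use word word_or_reset_closed [OF f closed] in auto)
      have "((\<lambda>q. foldl \<delta> q w) ^^ m) q = ((\<lambda>q. foldl \<delta> q w) ^^ Suc m) q"
        using m q by blast
      then have word_stable: "((\<lambda>q. foldl \<delta> q w) ^^ n) q = ((\<lambda>q. foldl \<delta> q w) ^^ m) q" if "m \<le> n" for n
        by (rule funpow_stable [OF sym that])
      have "(f ^^ n) q = (f ^^ m) q" if "m \<le> n" for n
        using f_word [of n] f_word [of m] word_stable [OF that] by simp
      from this [of "Suc (Suc m)"] this [of "Suc m"] show ?thesis
        by simp
    next
      case reset
      have "(f ^^ Suc n) q = c" for n
        using reset q by (induction n) auto
      then show ?thesis
        by (simp only:)
    qed
  qed
  then show ?thesis
    using that by blast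
qed

fun cascade_action ::
  "(nat \<Rightarrow> 'a \<Rightarrow> nat) \<Rightarrow> (nat \<Rightarrow> 'a \<Rightarrow> nat \<Rightarrow> nat) \<Rightarrow> nat \<Rightarrow> 'a list \<Rightarrow> nat \<Rightarrow> nat" where
  "cascade_action \<delta> \<tau> d [] b = b"
| "cascade_action \<delta> \<tau> d (a # w) b = cascade_action \<delta> \<tau> (\<delta> d a) w (\<tau> d a b)"

lemma foldl_cascade:
  "foldl (cascade \<delta> \<tau>) (prod_encode (d, b)) w = prod_encode (foldl \<delta> d w, cascade_action \<delta> \<tau> d w b)"
  by (induction w arbitrary: d b) (simp_all add: cascade_def)

lemma cascade_action_append:
  "cascade_action \<delta> \<tau> d (u @ v) b = cascade_action \<delta> \<tau> (foldl \<delta> d u) v (cascade_action \<delta> \<tau> d u b)"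
  by (induction u arbitrary: d b) simp_all

lemma cascade_action_loop:
  assumes "foldl \<delta> d w = d"
  shows "cascade_action \<delta> \<tau> d (concat (replicate k w)) = cascade_action \<delta> \<tau> d w ^^ k"
proof (induction k)
  case (Suc k)
  then show ?case
    using assms by (simp add: cascade_action_append fun_eq_iff funpow_swap1)
qed (simp add: fun_eq_iff)

lemma cascade_action_word_or_reset:
  assumes closedB: "\<forall>q\<in>QB. \<forall>a. \<delta>B q a \<in> QB" and closed: "\<forall>d\<in>QD. \<forall>a. \<delta> d a \<in> QD"
    and \<tau>: "\<forall>d\<in>QD. \<forall>a. word_or_reset QB \<delta>B (\<tau> d a)"
  shows "d \<in> QD \<Longrightarrow> word_or_reset QB \<delta>B (cascade_action \<delta> \<tau> d w)"
proof (induction w arbitrary: d)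
  case Nil
  then show ?case
    using word_or_reset_id by simp
next
  case (Cons a w)
  then have "word_or_reset QB \<delta>B (cascade_action \<delta> \<tau> (\<delta> d a) w \<circ> \<tau> d a)"
    using closed \<tau> by (intro word_or_reset_comp [OF closedB]) auto
  then show ?case
    by (simp add: comp_def)
qed

lemma aperiodic_cascade:
  assumes closed: "\<forall>d\<in>QD. \<forall>a. \<delta> d a \<in> QD" and aperiodic: "aperiodic_trans QD \<delta>"
    and closedB: "\<forall>q\<in>QB. \<forall>a. \<delta>B q a \<in> QB" and aperiodicB: "aperiodic_trans QB \<delta>B"
    and \<tau>: "\<forall>d\<in>QD. \<forall>a. word_or_reset QB \<delta>B (\<tau> d a)"
  shows "aperiodic_trans (prod_encode ` (QD \<times> QB)) (cascade \<delta> \<tau>)"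
proof -
  obtain mD where mD: "\<forall>d\<in>QD. \<forall>w. ((\<lambda>d. foldl \<delta> d w) ^^ mD) d = ((\<lambda>d. foldl \<delta> d w) ^^ Suc mD) d"
    using aperiodic aperiodic_trans_iff by blast
  obtain mB where mB: "\<And>f q. word_or_reset QB \<delta>B f \<Longrightarrow> q \<in> QB \<Longrightarrow> (f ^^ Suc mB) q = (f ^^ mB) q"
    using word_or_reset_aperiodic [OF closedB aperiodicB] by blast
  have "foldl (cascade \<delta> \<tau>) c (concat (replicate (mD + mB) w)) =
        foldl (cascade \<delta> \<tau>) c (concat (replicate (Suc (mD + mB)) w))"
    if c_in: "c \<in> prod_encode ` (QD \<times> QB)" for c w
  proof -
    obtain d b where c: "c = prod_encode (d, b)" "d \<in> QD" "b \<in> QB"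
      using c_in by blast
    define d' where "d' = foldl \<delta> d (concat (replicate mD w))"
    define b' where "b' = cascade_action \<delta> \<tau> d (concat (replicate mD w)) b"
    define h where "h = cascade_action \<delta> \<tau> d' w"
    have "((\<lambda>d. foldl \<delta> d w) ^^ Suc mD) d = ((\<lambda>d. foldl \<delta> d w) ^^ mD) d"
      using mD c(2) by (metis (no_types))
    then have loop: "foldl \<delta> d' w = d'"
      by (simp add: d'_def foldl_concat_replicate)
    have "d' \<in> QD"
      unfolding d'_def using foldl_closed [OF closed c(2)] .
    then have h: "word_or_reset QB \<delta>B h"
      unfolding h_def by (rule cascade_action_word_or_reset [OF closedB closed \<tau>])
    have "b' \<in> QB"
      unfolding b'_def using cascade_action_word_or_reset [OF closedB closed \<tau> c(2)] c(3)
      by (rule word_or_reset_closed [OF _ closedB])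
    have power: "foldl (cascade \<delta> \<tau>) c (concat (replicate (mD + k) w)) = prod_encode (d', (h ^^ k) b')" for k
    proof -
      have "foldl (cascade \<delta> \<tau>) c (concat (replicate (mD + k) w)) =
            foldl (cascade \<delta> \<tau>) (prod_encode (d', b')) (concat (replicate k w))"
        by (simp add: c(1) replicate_add foldl_cascade flip: d'_def b'_def)
      also have "\<dots> = prod_encode (foldl \<delta> d' (concat (replicate k w)),
                                   cascade_action \<delta> \<tau> d' (concat (replicate k w)) b')"
        by (rule foldl_cascade)
      also have "\<dots> = prod_encode (d', (h ^^ k) b')"
        using loop by (simp add: foldl_concat_replicate funpow_fixpoint cascade_action_loop h_def)
      finally show ?thesis .
    qed
    show ?thesis
      using power [of mB] power [of "Suc mB"] mB [OF h \<open>b' \<in> QB\<close>] by simp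
  qed
  then show ?thesis
    unfolding aperiodic_trans_def by blast
qed

lemma map_iter_upt: "w \<noteq> [] \<Longrightarrow> map (w\<^sup>\<omega>) [0..<n * length w] = concat (replicate n w)"
proof (induction n)
  case (Suc n)
  have "map (w\<^sup>\<omega>) [0..<Suc n * length w] = map (w\<^sup>\<omega>) [0..<length w] @ map (w\<^sup>\<omega>) [length w..<n * length w + length w]"
    by (simp add: upt_add_eq_append [of 0 "length w"] add.commute)
  also have "map (w\<^sup>\<omega>) [length w..<n * length w + length w] = map (w\<^sup>\<omega>) [0..<n * length w]"
    using Suc.prems by (simp flip: map_add_upt)
  also have "map (w\<^sup>\<omega>) [0..<length w] = w"
    using Suc.prems by (intro nth_equalityI) simp_all
  finally show ?case
    using Suc by simp
qed simp

section \<open>Aperiodicity of cyclic automata\<close>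

text \<open>A cyclic automaton runs through the positions \<open>0, \<dots>, period - 1\<close> of a cyclic pattern until it
  falls into an absorbing sink. If positions at every nonzero distance are told apart by the words of
  length \<open>window\<close> readable there, every input of period not divisible by \<open>period\<close> is eventually
  rejected; and since position \<open>0\<close> determines the state, a word whose length is divisible by
  \<open>period\<close> acts idempotently.\<close>

locale cyclic_automaton =
  fixes \<delta> :: "nat \<Rightarrow> 'a \<Rightarrow> nat" and sink period :: nat and pos :: "nat \<Rightarrow> nat" and window :: nat
  assumes sink_absorbing: "\<delta> sink a = sink"
    and closed: "q \<le> sink \<Longrightarrow> \<delta> q a \<le> sink"
    and pos_less: "q < sink \<Longrightarrow> pos q < period"
    and pos_step: "q < sink \<Longrightarrow> \<delta> q a \<noteq> sink \<Longrightarrow> pos (\<delta> q a) = Suc (pos q) mod period"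
    and pos_0_unique: "q < sink \<Longrightarrow> q' < sink \<Longrightarrow> pos q = 0 \<Longrightarrow> pos q' = 0 \<Longrightarrow> q = q'"
    and windows_differ: "0 < s \<Longrightarrow> s < period \<Longrightarrow> \<exists>j<period. \<forall>q q' v. q < sink \<longrightarrow> q' < sink \<longrightarrow>
      pos q = j \<longrightarrow> pos q' = (j + s) mod period \<longrightarrow> length v = window \<longrightarrow>
      foldl \<delta> q v = sink \<or> foldl \<delta> q' v = sink"
begin

lemma foldl_sink [simp]: "foldl \<delta> sink v = sink"
  by (induction v) (simp_all add: sink_absorbing)

lemma foldl_le_sink: "q \<le> sink \<Longrightarrow> foldl \<delta> q v \<le> sink"
  by (induction v arbitrary: q) (simp_all add: closed)

lemma foldl_append_alive: "foldl \<delta> q (u @ v) \<noteq> sink \<Longrightarrow> foldl \<delta> q u \<noteq> sink"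
  by (metis foldl_append foldl_sink)

lemma pos_foldl: "q < sink \<Longrightarrow> foldl \<delta> q v \<noteq> sink \<Longrightarrow> pos (foldl \<delta> q v) = (pos q + length v) mod period"
proof (induction v arbitrary: q)
  case Nil
  then show ?case
    using pos_less by simp
next
  case (Cons a v)
  then have alive: "\<delta> q a \<noteq> sink"
    by (metis foldl_Cons foldl_sink)
  then have "\<delta> q a < sink"
    using closed [of q a] Cons.prems(1) by simp
  with Cons alive show ?case
    by (simp add: pos_step mod_add_left_eq)
qed

lemma run_sink_after: "run \<delta> q x n = sink \<Longrightarrow> n \<le> m \<Longrightarrow> run \<delta> q x m = sink"
  using run_add [of \<delta> q x n "m - n"] by simp

lemma periodic_run_dies:
  assumes periodic: "\<And>t. x (t + L) = x t" and L: "L mod period \<noteq> 0" and q: "q \<le> sink"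
  shows "run \<delta> q x (period + L + window) = sink"
proof (rule ccontr)
  let ?r = "run \<delta> q x"
  assume alive: "?r (period + L + window) \<noteq> sink"
  have alive_before: "?r n \<noteq> sink" if "n \<le> period + L + window" for n
    using run_sink_after that alive by blast
  have "q \<noteq> sink"
    using alive by (auto simp: run_def)
  with q have "q < sink"
    by simp
  then have pos_q: "pos q < period"
    by (rule pos_less)
  obtain j where j: "j < period" and differ: "\<forall>q q' v. q < sink \<longrightarrow> q' < sink \<longrightarrow>
      pos q = j \<longrightarrow> pos q' = (j + L mod period) mod period \<longrightarrow> length v = window \<longrightarrow>
      foldl \<delta> q v = sink \<or> foldl \<delta> q' v = sink"
    using windows_differ [of "L mod period"] L pos_q by auto
  define t where "t = (j + period - pos q) mod period"
  have "t < period"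
    using pos_q by (simp add: t_def)
  have "(pos q + t) mod period = (j + period) mod period"
    using pos_q by (simp add: t_def mod_add_right_eq)
  then have pos_t: "(pos q + t) mod period = j"
    using j by simp
  let ?v = "map x [t..<t + window]"
  have "x (t + L + i) = x (t + i)" for i
    using periodic [of "t + i"] by (simp add: add.commute add.left_commute)
  then have shifted: "map x [t + L..<t + L + window] = ?v"
    by (intro nth_equalityI) simp_all
  have "?r n \<le> sink" for n
    using foldl_le_sink [OF q] by (simp add: run_def)
  then have states: "?r t < sink" "?r (t + L) < sink"
    using alive_before [of t] alive_before [of "t + L"] \<open>t < period\<close> by (simp_all add: order_less_le)
  have "pos (?r (t + L)) = (pos q + t + L) mod period"
    using pos_foldl [OF \<open>q < sink\<close>] states(2) by (simp add: run_def add.assoc)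
  also have "\<dots> = (j + L mod period) mod period"
    using pos_t by (metis mod_add_left_eq mod_add_right_eq)
  finally have "foldl \<delta> (?r t) ?v = sink \<or> foldl \<delta> (?r (t + L)) ?v = sink"
    using differ states pos_foldl [OF \<open>q < sink\<close>] pos_t by (simp add: run_def)
  moreover have "foldl \<delta> (?r t) ?v = ?r (t + window)" "foldl \<delta> (?r (t + L)) ?v = ?r (t + L + window)"
    using run_add [of \<delta> q x t window] run_add [of \<delta> q x "t + L" window] shifted by simp_all
  ultimately show False
    using alive_before [of "t + window"] alive_before [of "t + L + window"] \<open>t < period\<close> by auto
qed

lemma power_dies:
  assumes "length w mod period \<noteq> 0" and "q \<le> sink"
  shows "((\<lambda>q. foldl \<delta> q w) ^^ (period + window + 1)) q = sink"
proof -
  let ?N = "period + window + 1"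
  have "w \<noteq> []"
    using assms(1) by auto
  have "run \<delta> q (w\<^sup>\<omega>) (period + length w + window) = sink"
    using \<open>w \<noteq> []\<close> by (intro periodic_run_dies assms) simp_all
  moreover have "period + length w + window \<le> ?N * length w"
    using \<open>w \<noteq> []\<close> by (cases "length w") (simp_all add: algebra_simps)
  ultimately have "run \<delta> q (w\<^sup>\<omega>) (?N * length w) = sink"
    by (rule run_sink_after)
  then have "foldl \<delta> q (map (w\<^sup>\<omega>) [0..<?N * length w]) = sink"
    by (simp only: run_def)
  then show ?thesis
    by (simp only: map_iter_upt [OF \<open>w \<noteq> []\<close>] foldl_concat_replicate)
qed

lemma foldl_synchronised:
  assumes "q < sink" "q' < sink" "pos q = pos q'" "period \<le> length v"
    and "foldl \<delta> q v \<noteq> sink" "foldl \<delta> q' v \<noteq> sink"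
  shows "foldl \<delta> q v = foldl \<delta> q' v"
proof -
  define t where "t = (period - pos q) mod period"
  have "pos q < period"
    using assms(1) by (rule pos_less)
  have "t \<le> period - pos q"
    unfolding t_def by (rule mod_less_eq_dividend)
  then have "t \<le> length v"
    using assms(4) by linarith
  have "(pos q + t) mod period = (pos q + (period - pos q)) mod period"
    unfolding t_def by (rule mod_add_right_eq)
  also have "\<dots> = 0"
    using \<open>pos q < period\<close> by simp
  finally have "(pos q + t) mod period = 0" .
  have reach_0: "foldl \<delta> p (take t v) < sink \<and> pos (foldl \<delta> p (take t v)) = 0"
    if "p < sink" "pos p = pos q" "foldl \<delta> p v \<noteq> sink" for p
  proof -
    have "foldl \<delta> p (take t v) \<noteq> sink"
      using foldl_append_alive [of p "take t v" "drop t v"] that(3) by simp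
    moreover have "foldl \<delta> p (take t v) \<le> sink"
      using foldl_le_sink that(1) by simp
    ultimately show ?thesis
      using pos_foldl [OF that(1)] that(2) \<open>t \<le> length v\<close> \<open>(pos q + t) mod period = 0\<close> by simp
  qed
  have "foldl \<delta> q (take t v) = foldl \<delta> q' (take t v)"
    by (rule pos_0_unique)
      (use reach_0 [OF assms(1) refl assms(5)] reach_0 [OF assms(2) assms(3) [symmetric] assms(6)] in auto)
  then have "foldl \<delta> (foldl \<delta> q (take t v)) (drop t v) = foldl \<delta> (foldl \<delta> q' (take t v)) (drop t v)"
    by simp
  then show ?thesis
    by (simp flip: foldl_append)
qed

lemma power_idempotent:
  assumes "length w mod period = 0" and "w \<noteq> []" and "q \<le> sink"
  shows "foldl \<delta> (foldl \<delta> (foldl \<delta> q w) w) w = foldl \<delta> (foldl \<delta> q w) w"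
proof (cases "foldl \<delta> (foldl \<delta> q w) w = sink")
  case alive: False
  then have "foldl \<delta> q w \<noteq> sink" "q \<noteq> sink"
    by (metis foldl_sink)+
  then have "q < sink" "foldl \<delta> q w < sink"
    using assms(3) foldl_le_sink [OF assms(3), of w] by simp_all
  moreover have "pos (foldl \<delta> q w) = pos q"
    using pos_foldl [OF \<open>q < sink\<close> \<open>foldl \<delta> q w \<noteq> sink\<close>] pos_less [OF \<open>q < sink\<close>] assms(1)
    by (metis add.right_neutral mod_add_right_eq mod_less)
  moreover have "period \<le> length w"
    using assms(1,2) by (intro dvd_imp_le) (simp_all add: mod_eq_0_iff_dvd)
  ultimately have "foldl \<delta> (foldl \<delta> q w) w = foldl \<delta> q w"
    using foldl_synchronised alive \<open>foldl \<delta> q w \<noteq> sink\<close> by blast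
  then show ?thesis
    by simp
qed simp

theorem aperiodic: "aperiodic_trans {..sink} \<delta>"
  unfolding aperiodic_trans_iff
proof (intro exI ballI allI)
  fix q w
  assume "q \<in> {..sink}"
  then have q: "q \<le> sink"
    by simp
  let ?f = "\<lambda>q. foldl \<delta> q w"
  let ?m = "period + window + 1"
  show "(?f ^^ ?m) q = (?f ^^ Suc ?m) q"
  proof (cases "length w mod period = 0")
    case True
    show ?thesis
    proof (cases "w = []")
      case False
      with True have "0 < period"
        by (metis gr0I length_0_conv mod_by_0)
      then have "2 \<le> ?m"
        by simp
      have "(?f ^^ Suc 2) q = (?f ^^ 2) q"
        using power_idempotent [OF True False q] by (simp add: numeral_eq_Suc)
      then have stable: "(?f ^^ n) q = (?f ^^ 2) q" if "2 \<le> n" for n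
        by (rule funpow_stable [OF _ that])
      show ?thesis
        using stable [OF \<open>2 \<le> ?m\<close>] stable [OF le_SucI [OF \<open>2 \<le> ?m\<close>]] by (simp only:)
    qed (simp add: funpow_fixpoint)
  next
    case False
    have "(?f ^^ Suc ?m) q = (?f ^^ ?m) (?f q)"
      by (simp only: funpow_Suc_right comp_apply)
    then show ?thesis
      using power_dies [OF False q] power_dies [OF False foldl_le_sink [OF q]] by (simp only:)
  qed
qed

end

section \<open>The coding f and the operations q_i\<close>

text \<open>\<open>d1\<close> checks that the input is a sequence of codes \<open>tl6 x\<close>: states \<open>0, \<dots>, 3\<close> are the first four
  positions of a block, \<open>4\<close> and \<open>5\<close> follow \<open>1100\<close> and \<open>1101\<close>, \<open>6 + x\<close> follows the first five letters of
  \<open>tl6 x\<close>, and \<open>9\<close> is the sink.\<close>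

definition d1 :: "nat \<Rightarrow> bool \<Rightarrow> nat" where
  "d1 s a = (if s = 0 then (if a then 1 else 9) else if s = 1 then (if a then 2 else 9)
     else if s = 2 then (if a then 9 else 3) else if s = 3 then (if a then 5 else 4)
     else if s = 4 then (if a then 8 else 6) else if s = 5 then (if a then 9 else 7)
     else if s = 6 \<or> s = 7 \<or> s = 8 then (if a then 9 else 0) else 9)"

definition d1_pos :: "nat \<Rightarrow> nat" where
  "d1_pos q = (if q \<le> 3 then q else if q \<le> 5 then 4 else 5)"

interpretation d1: cyclic_automaton d1 9 6 d1_pos 2
proof
  fix q q' s :: nat and a :: bool
  show "d1 9 a = 9" "q \<le> 9 \<Longrightarrow> d1 q a \<le> 9"
    by (simp_all add: d1_def)
  show "q < 9 \<Longrightarrow> d1_pos q < 6"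
    by (simp add: d1_pos_def)
  show "q < 9 \<Longrightarrow> d1 q a \<noteq> 9 \<Longrightarrow> d1_pos (d1 q a) = Suc (d1_pos q) mod 6"
    by (auto simp: d1_def d1_pos_def split: if_splits)
  show "q < 9 \<Longrightarrow> q' < 9 \<Longrightarrow> d1_pos q = 0 \<Longrightarrow> d1_pos q' = 0 \<Longrightarrow> q = q'"
    by (simp add: d1_pos_def split: if_splits)
  \<comment> \<open>only position 0 can read \<open>11\<close>\<close>
  have eleven: "foldl d1 q [True, True] = 9" if "0 < q" for q
    using that by (simp add: d1_def)
  have not_eleven: "foldl d1 q v = 9" if q: "q = 0" and v: "length v = 2" "v \<noteq> [True, True]" for q v
  proof -
    obtain a b where "v = [a, b]"
      using v(1) by (auto simp: length_Suc_conv numeral_eq_Suc)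
    then show ?thesis
      using q v(2) by (cases a; cases b) (simp_all add: d1_def)
  qed
  show "\<exists>j<6. \<forall>q q' v. q < 9 \<longrightarrow> q' < 9 \<longrightarrow> d1_pos q = j \<longrightarrow> d1_pos q' = (j + s) mod 6 \<longrightarrow>
      length v = 2 \<longrightarrow> foldl d1 q v = 9 \<or> foldl d1 q' v = 9" if "0 < s" "s < 6"
  proof (intro exI [of _ 0] conjI allI impI)
    fix q q' :: nat and v :: "bool list"
    assume "q < 9" "q' < 9" "d1_pos q = 0" "d1_pos q' = (0 + s) mod 6" "length v = 2"
    then have "q = 0" "0 < q'"
      using that by (auto simp: d1_pos_def split: if_splits)
    then show "foldl d1 q v = 9 \<or> foldl d1 q' v = 9"
      using eleven not_eleven \<open>length v = 2\<close> by (cases "v = [True, True]") simp_all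
  qed simp
qed

lemma d1_automaton: "automaton {..9} 0 d1"
  unfolding automaton_def using d1.closed by auto

definition block :: "bool word \<Rightarrow> nat \<Rightarrow> bool list" where
  "block \<xi> b = \<xi> [6 * b \<rightarrow> 6 * b + 6]"

definition codes :: "bool list set" where
  "codes = {tl6 0, tl6 1, tl6 2}"

definition decode :: "bool list \<Rightarrow> nat" where
  "decode s = (if s = tl6 1 then 1 else if s = tl6 2 then 2 else 0)"

definition digit :: "bool word \<Rightarrow> nat \<Rightarrow> nat" where
  "digit \<xi> b = decode (block \<xi> b)"

definition coded :: "bool word \<Rightarrow> bool" where
  "coded \<xi> \<longleftrightarrow> (\<forall>b. block \<xi> b \<in> codes)"

lemma length_tl6 [simp]: "length (tl6 x) = 6"
  by (simp add: tl6_def)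

lemma le_2_cases: "(x::nat) \<le> 2 \<Longrightarrow> x = 0 \<or> x = 1 \<or> x = 2"
  by auto

lemma decode_tl6: "x \<le> 2 \<Longrightarrow> decode (tl6 x) = x"
  by (auto dest: le_2_cases simp: decode_def tl6_def)

lemma length_block [simp]: "length (block \<xi> b) = 6"
  by (simp add: block_def)

lemma nth_block: "r < 6 \<Longrightarrow> block \<xi> b ! r = \<xi> (6 * b + r)"
  by (simp add: block_def)

lemma coded_block: "coded \<xi> \<Longrightarrow> block \<xi> b = tl6 (digit \<xi> b) \<and> digit \<xi> b \<le> 2"
  unfolding coded_def codes_def digit_def by (auto simp: decode_def tl6_def)

lemma coded_nth: "coded \<xi> \<Longrightarrow> \<xi> n = tl6 (digit \<xi> (n div 6)) ! (n mod 6)"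
  using nth_block [of "n mod 6" \<xi> "n div 6"] coded_block [of \<xi> "n div 6"] by simp

lemma coded_eq_fenc: "coded \<xi> \<Longrightarrow> \<xi> = fenc (digit \<xi>)"
  by (simp add: fun_eq_iff fenc_def coded_nth)

lemma block_fenc: "block (fenc \<eta>) b = tl6 (\<eta> b)"
  by (rule nth_equalityI) (simp_all add: nth_block fenc_def)

lemma fenc_coded:
  assumes "ternary \<eta>"
  shows "coded (fenc \<eta>)" and "digit (fenc \<eta>) = \<eta>"
proof -
  have "\<eta> b \<le> 2" for b
    using assms by (simp add: ternary_def)
  then have "block (fenc \<eta>) b \<in> codes" for b
    using le_2_cases [of "\<eta> b"] by (auto simp: codes_def block_fenc)
  then show "coded (fenc \<eta>)"
    by (simp add: coded_def)
  show "digit (fenc \<eta>) = \<eta>"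
    using \<open>\<And>b. \<eta> b \<le> 2\<close> by (simp add: fun_eq_iff digit_def block_fenc decode_tl6)
qed

lemma fenc_image_ternary: "\<xi> \<in> fenc ` {\<eta>. ternary \<eta>} \<longleftrightarrow> coded \<xi>"
proof
  assume "coded \<xi>"
  moreover have "ternary (digit \<xi>)"
    using coded_block [OF \<open>coded \<xi>\<close>] by (simp add: ternary_def)
  ultimately show "\<xi> \<in> fenc ` {\<eta>. ternary \<eta>}"
    using coded_eq_fenc by blast
qed (auto simp: fenc_coded)

definition code_state :: "nat \<Rightarrow> nat \<Rightarrow> nat" where
  "code_state x r = (if r < 4 then r else if r = 4 then (if x = 1 then 5 else 4) else 6 + x)"

lemma code_state_le_5: "r < 6 \<Longrightarrow> r \<noteq> 5 \<Longrightarrow> code_state x r \<le> 5"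
  by (simp add: code_state_def)

lemma foldl_d1_code_prefix: "x \<le> 2 \<Longrightarrow> r < 6 \<Longrightarrow> foldl d1 0 (take r (tl6 x)) = code_state x r"
  by (auto dest!: le_2_cases simp: less_Suc_eq numeral_eq_Suc tl6_def d1_def code_state_def)

lemma foldl_d1_code: "x \<le> 2 \<Longrightarrow> foldl d1 0 (tl6 x) = 0"
  by (auto dest: le_2_cases simp: tl6_def d1_def)

lemma foldl_d1_noncode:
  assumes "length s = 6" and "s \<notin> codes"
  shows "foldl d1 0 s = 9"
proof -
  obtain a1 a2 a3 a4 a5 a6 where s: "s = [a1, a2, a3, a4, a5, a6]"
    using assms(1) by (auto simp: numeral_eq_Suc length_Suc_conv)
  show ?thesis
    using assms(2) unfolding s codes_def
    by (cases a1; cases a2; cases a3; cases a4; cases a5; cases a6) (simp_all add: d1_def tl6_def)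
qed

lemma run_d1_block:
  assumes "r \<le> 6"
  shows "run d1 0 \<xi> (6 * b + r) = foldl d1 (run d1 0 \<xi> (6 * b)) (take r (block \<xi> b))"
  using assms by (simp add: run_add block_def subsequence_def take_map)

lemma run_d1_boundary: "run d1 0 \<xi> (6 * b) = 0 \<or> run d1 0 \<xi> (6 * b) = 9"
proof (induction b)
  case (Suc b)
  have "run d1 0 \<xi> (6 * Suc b) = foldl d1 (run d1 0 \<xi> (6 * b)) (block \<xi> b)"
    using run_d1_block [of 6 \<xi> b] by (simp add: add.commute)
  moreover have "foldl d1 0 (block \<xi> b) \<in> {0, 9}"
  proof (cases "block \<xi> b \<in> codes")
    case True
    then show ?thesis
      using foldl_d1_code [of 0] foldl_d1_code [of 1] foldl_d1_code [of 2] by (auto simp: codes_def)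
  qed (simp add: foldl_d1_noncode)
  ultimately show ?case
    using Suc by auto
qed simp

lemma run_d1_coded:
  assumes "coded \<xi>"
  shows "run d1 0 \<xi> n = code_state (digit \<xi> (n div 6)) (n mod 6)"
proof -
  have boundary: "run d1 0 \<xi> (6 * b) = 0" for b
  proof (induction b)
    case (Suc b)
    then show ?case
      using run_d1_block [of 6 \<xi> b] coded_block [OF assms, of b] foldl_d1_code by (simp add: add.commute)
  qed simp
  have "run d1 0 \<xi> n = foldl d1 0 (take (n mod 6) (tl6 (digit \<xi> (n div 6))))"
    using run_d1_block [of "n mod 6" \<xi> "n div 6"] boundary coded_block [OF assms] by simp
  then show ?thesis
    using foldl_d1_code_prefix coded_block [OF assms] by simp
qed

lemma limit_run_d1_uncoded:
  assumes "\<not> coded \<xi>"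
  shows "9 \<in> limit (run d1 0 \<xi>)"
proof -
  obtain b where b: "block \<xi> b \<notin> codes"
    using assms unfolding coded_def by blast
  have "run d1 0 \<xi> (6 * b + 6) = 9"
    using run_d1_block [of 6 \<xi> b] run_d1_boundary [of \<xi> b] foldl_d1_noncode [OF _ b] by auto
  then have "run d1 0 \<xi> n = 9" if "6 * b + 6 \<le> n" for n
    using d1.run_sink_after that by blast
  then show ?thesis
    unfolding limit_iff_frequent INFM_nat_le by (metis le_add2 add.commute)
qed

lemma limit_run_d1_coded:
  assumes "coded \<xi>"
  shows "9 \<notin> limit (run d1 0 \<xi>)" and "8 \<in> limit (run d1 0 \<xi>) \<longleftrightarrow> infinite {b. digit \<xi> b = 2}"
proof -
  have state: "run d1 0 \<xi> n = code_state (digit \<xi> (n div 6)) (n mod 6)" "digit \<xi> (n div 6) \<le> 2" for n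
    using run_d1_coded [OF assms] coded_block [OF assms] by simp_all
  have "run d1 0 \<xi> n \<noteq> 9" for n
    using state(1) [of n] state(2) [of n] by (auto simp: code_state_def)
  then have "run d1 0 \<xi> -` {9} = {}"
    by auto
  then show "9 \<notin> limit (run d1 0 \<xi>)"
    by (simp add: limit_vimage)
  have "run d1 0 \<xi> -` {8} = (\<lambda>b. 6 * b + 5) ` {b. digit \<xi> b = 2}"
  proof (intro set_eqI iffI)
    fix n
    assume "n \<in> run d1 0 \<xi> -` {8}"
    then have "n mod 6 = 5" "digit \<xi> (n div 6) = 2"
      using state [of n] by (auto simp: code_state_def split: if_splits)
    then show "n \<in> (\<lambda>b. 6 * b + 5) ` {b. digit \<xi> b = 2}"
      using mult_div_mod_eq [of 6 n] by (intro image_eqI [of _ _ "n div 6"]) simp_all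
  next
    fix n
    assume "n \<in> (\<lambda>b. 6 * b + 5) ` {b. digit \<xi> b = 2}"
    then show "n \<in> run d1 0 \<xi> -` {8}"
      using state(1) by (auto simp: code_state_def)
  qed
  then show "8 \<in> limit (run d1 0 \<xi>) \<longleftrightarrow> infinite {b. digit \<xi> b = 2}"
    by (simp add: limit_vimage finite_image_iff inj_on_def)
qed

lemma coded_double_one:
  assumes "coded \<xi>" and "\<xi> n" and "\<xi> (Suc n)"
  shows "n mod 6 = 0"
proof -
  let ?x = "digit \<xi> (n div 6)"
  have x: "?x = 0 \<or> ?x = 1 \<or> ?x = 2"
    using coded_block [OF assms(1)] le_2_cases by blast
  have "n mod 6 \<noteq> 5"
    using assms(2) coded_nth [OF assms(1), of n] x by (auto simp: tl6_def)
  then have "Suc n mod 6 = Suc (n mod 6)" "Suc n div 6 = n div 6"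
    by (simp_all add: mod_Suc div_Suc)
  moreover have "n mod 6 < 5"
    using \<open>n mod 6 \<noteq> 5\<close> by simp
  then have "n mod 6 = 0 \<or> n mod 6 = 1 \<or> n mod 6 = 2 \<or> n mod 6 = 3 \<or> n mod 6 = 4"
    by linarith
  ultimately show ?thesis
    using assms(2,3) coded_nth [OF assms(1), of n] coded_nth [OF assms(1), of "Suc n"] x
    by (auto simp: tl6_def)
qed

lemma code_2_occurrences:
  assumes "coded \<xi>"
  shows "{n. \<xi> [n \<rightarrow> n + 6] = tl6 2} = (\<lambda>b. 6 * b) ` {b. digit \<xi> b = 2}"
proof (intro set_eqI iffI)
  fix n
  assume "n \<in> {n. \<xi> [n \<rightarrow> n + 6] = tl6 2}"
  then have occurrence: "\<xi> [n \<rightarrow> n + 6] = tl6 2"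
    by simp
  have "\<xi> n = tl6 2 ! 0" "\<xi> (Suc n) = tl6 2 ! 1"
    using subsequence_nth [of 0 "n + 6" n \<xi>] subsequence_nth [of 1 "n + 6" n \<xi>] occurrence by simp_all
  then have "\<xi> n" "\<xi> (Suc n)"
    by (simp_all add: tl6_def)
  then have "n mod 6 = 0"
    by (rule coded_double_one [OF assms])
  then have n: "n = 6 * (n div 6)"
    using mult_div_mod_eq [of 6 n] by simp
  then have "block \<xi> (n div 6) = tl6 2"
    using occurrence unfolding block_def by simp
  then have "digit \<xi> (n div 6) = 2"
    by (simp add: digit_def decode_tl6)
  then show "n \<in> (\<lambda>b. 6 * b) ` {b. digit \<xi> b = 2}"
    using n by blast
next
  fix n
  assume "n \<in> (\<lambda>b. 6 * b) ` {b. digit \<xi> b = 2}"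
  then show "n \<in> {n. \<xi> [n \<rightarrow> n + 6] = tl6 2}"
    using coded_block [OF assms] by (auto simp: block_def)
qed

lemma infinite_code_2_occurrences:
  "coded \<xi> \<Longrightarrow> (\<exists>\<^sub>\<infinity>n. \<xi> [n \<rightarrow> n + 6] = tl6 2) \<longleftrightarrow> infinite {b. digit \<xi> b = 2}"
  by (simp add: INFM_iff_infinite code_2_occurrences finite_image_iff inj_on_def)

lemma qop_trivial: "\<not> coded \<xi> \<or> infinite {b. digit \<xi> b = 2} \<Longrightarrow> qop i A \<xi> = i"
  unfolding qop_def using fenc_image_ternary infinite_code_2_occurrences by auto

lemma ternary_bit: "ternary (bit \<circ> \<eta>)"
  by (simp add: ternary_def bit_def)

lemma digit_fenc_bit: "digit (fenc (bit \<circ> \<eta>)) = bit \<circ> \<eta>"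
  by (rule fenc_coded(2) [OF ternary_bit])

lemma digit_fenc_last_2:
  assumes "set \<sigma> \<subseteq> {0, 1, 2}"
  shows "digit (fenc ((\<sigma> @ [2]) \<frown> (bit \<circ> \<eta>))) = (\<sigma> @ [2]) \<frown> (bit \<circ> \<eta>)"
proof (rule fenc_coded(2))
  have "\<sigma> ! j \<le> 2" if "j < length \<sigma>" for j
    using assms nth_mem [OF that] by auto
  then show "ternary ((\<sigma> @ [2]) \<frown> (bit \<circ> \<eta>))"
    by (auto simp: ternary_def conc_def nth_append bit_def)
qed

lemma qop_no_2:
  assumes "coded \<xi>" and "\<forall>b. digit \<xi> b \<noteq> 2"
  shows "qop i A \<xi> = A (\<lambda>b. digit \<xi> b = 1)"
proof -
  let ?\<eta> = "\<lambda>b. digit \<xi> b = 1"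
  have "bit \<circ> ?\<eta> = digit \<xi>"
    using coded_block [OF assms(1)] assms(2) le_2_cases by (fastforce simp: fun_eq_iff bit_def)
  then have \<xi>: "\<xi> = fenc (bit \<circ> ?\<eta>)"
    using coded_eq_fenc [OF assms(1)] by simp
  have "(THE \<eta>. \<xi> = fenc (bit \<circ> \<eta>)) = ?\<eta>"
  proof (rule the_equality)
    fix \<eta>
    assume "\<xi> = fenc (bit \<circ> \<eta>)"
    then have "digit \<xi> = bit \<circ> \<eta>"
      by (simp add: digit_fenc_bit)
    then show "\<eta> = ?\<eta>"
      by (auto simp: fun_eq_iff bit_def)
  qed (rule \<xi>)
  moreover have "finite {b. digit \<xi> b = 2}"
    using assms(2) by simp
  ultimately show ?thesis
    using assms(1) \<xi> unfolding qop_def by (auto simp: fenc_image_ternary infinite_code_2_occurrences)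
qed

lemma last_2_decomposition_unique:
  assumes last: "digit \<xi> b0 = 2" "\<forall>b>b0. digit \<xi> b \<noteq> 2"
    and \<sigma>: "set \<sigma> \<subseteq> {0, 1, 2}" and \<xi>: "\<xi> = fenc ((\<sigma> @ [2]) \<frown> (bit \<circ> \<eta>))"
  shows "\<eta> = (\<lambda>j. digit \<xi> (Suc b0 + j) = 1)"
proof -
  have digits: "digit \<xi> = (\<sigma> @ [2]) \<frown> (bit \<circ> \<eta>)"
    unfolding \<xi> by (rule digit_fenc_last_2 [OF \<sigma>])
  then have "digit \<xi> (length \<sigma>) = 2"
    by (simp add: conc_def)
  then have "length \<sigma> \<le> b0"
    using last(2) by (meson not_le)
  moreover have "\<not> length \<sigma> < b0"
  proof
    assume "length \<sigma> < b0"
    then have "digit \<xi> b0 = bit (\<eta> (b0 - Suc (length \<sigma>)))"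
      using digits by (simp add: conc_def)
    then show False
      using last(1) by (simp add: bit_def split: if_splits)
  qed
  ultimately have "length \<sigma> = b0"
    by simp
  then show ?thesis
    using digits by (simp add: fun_eq_iff conc_def bit_def)
qed

lemma qop_last_2:
  assumes "coded \<xi>" and "finite {b. digit \<xi> b = 2}"
    and last: "digit \<xi> b0 = 2" "\<forall>b>b0. digit \<xi> b \<noteq> 2"
  shows "qop i A \<xi> = A (\<lambda>j. digit \<xi> (Suc b0 + j) = 1)"
proof -
  let ?\<eta> = "\<lambda>j. digit \<xi> (Suc b0 + j) = 1"
  have digit_le: "digit \<xi> b \<le> 2" for b
    using coded_block [OF assms(1)] by simp
  define \<sigma> where "\<sigma> = map (digit \<xi>) [0..<b0]"
  have "digit \<xi> b \<in> {0, 1, 2}" for b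
    using digit_le [of b] by auto
  then have \<sigma>: "set \<sigma> \<subseteq> {0, 1, 2}"
    unfolding \<sigma>_def set_map image_subset_iff by blast
  have "(\<sigma> @ [2]) \<frown> (bit \<circ> ?\<eta>) = digit \<xi>"
  proof
    fix n
    show "((\<sigma> @ [2]) \<frown> (bit \<circ> ?\<eta>)) n = digit \<xi> n"
    proof (cases "b0 < n")
      case True
      then have "digit \<xi> n \<noteq> 2" "Suc b0 + (n - Suc b0) = n"
        using last(2) by simp_all
      then show ?thesis
        using True digit_le [of n] by (auto simp: conc_def \<sigma>_def bit_def)
    qed (use last(1) in \<open>auto simp: conc_def \<sigma>_def nth_append\<close>)
  qed
  then have \<xi>: "\<xi> = fenc ((\<sigma> @ [2]) \<frown> (bit \<circ> ?\<eta>))"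
    using coded_eq_fenc [OF assms(1)] by simp
  have not_binary: "\<nexists>\<eta>. \<xi> = fenc (bit \<circ> \<eta>)"
  proof
    assume "\<exists>\<eta>. \<xi> = fenc (bit \<circ> \<eta>)"
    then obtain \<eta> where "digit \<xi> = bit \<circ> \<eta>"
      using digit_fenc_bit by metis
    then show False
      using last(1) by (auto simp: fun_eq_iff bit_def split: if_splits)
  qed
  have "(THE \<eta>. \<exists>\<sigma>. set \<sigma> \<subseteq> {0, 1, 2} \<and> \<xi> = fenc ((\<sigma> @ [2]) \<frown> (bit \<circ> \<eta>))) = ?\<eta>"
  proof (rule the_equality)
    show "\<exists>\<sigma>. set \<sigma> \<subseteq> {0, 1, 2} \<and> \<xi> = fenc ((\<sigma> @ [2]) \<frown> (bit \<circ> ?\<eta>))"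
      using \<sigma> \<xi> by blast
  next
    fix \<eta>
    assume "\<exists>\<sigma>. set \<sigma> \<subseteq> {0, 1, 2} \<and> \<xi> = fenc ((\<sigma> @ [2]) \<frown> (bit \<circ> \<eta>))"
    then show "\<eta> = ?\<eta>"
      using last_2_decomposition_unique [OF last] by blast
  qed
  then show ?thesis
    using assms(1,2) not_binary unfolding qop_def by (simp add: fenc_image_ternary infinite_code_2_occurrences)
qed

lemma limit_reindex_div:
  fixes k :: nat
  assumes "0 < k" and "\<And>n. N \<le> n \<Longrightarrow> x n = y ((n + a) div k - c)"
  shows "limit x = limit y"
proof (rule limit_reindex [where g = "\<lambda>n. (n + a) div k - c" and x = x and y = y and N = N, OF assms(2)])
  show "(n + a) div k - c \<le> (Suc n + a) div k - c" for n
    by (simp add: diff_le_mono div_le_mono)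
  show "(Suc n + a) div k - c \<le> Suc ((n + a) div k - c)" for n
  proof -
    have "(Suc n + a) div k \<le> (n + a + k) div k"
      using assms(1) by (intro div_le_mono) simp
    also have "\<dots> = (n + a) div k + 1"
      using assms(1) by (simp add: div_add_self2)
    finally show ?thesis
      by linarith
  qed
  show "\<exists>n. m \<le> (n + a) div k - c" for m
    using assms(1) by (intro exI [of _ "k * (m + c)"]) simp
qed

text \<open>The second component of the automaton for \<open>q_i\<close>: at the last letter of a code it feeds the digit
  \<open>0\<close> or \<open>1\<close> to the given automaton, and it restarts at the digit \<open>2\<close>.\<close>

definition qop_step :: "(nat \<Rightarrow> bool \<Rightarrow> nat) \<Rightarrow> nat \<Rightarrow> nat \<Rightarrow> bool \<Rightarrow> nat \<Rightarrow> nat" where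
  "qop_step \<delta> q0 d a q =
    (if d1 d a = 6 then \<delta> q False else if d1 d a = 7 then \<delta> q True else if d1 d a = 8 then q0 else q)"

fun reset_run :: "(nat \<Rightarrow> bool \<Rightarrow> nat) \<Rightarrow> nat \<Rightarrow> (nat \<Rightarrow> nat) \<Rightarrow> nat \<Rightarrow> nat" where
  "reset_run \<delta> q0 \<tau> 0 = q0"
| "reset_run \<delta> q0 \<tau> (Suc b) = (if \<tau> b = 2 then q0 else \<delta> (reset_run \<delta> q0 \<tau> b) (\<tau> b = 1))"

lemma cascade_run_qop_step:
  assumes "coded \<xi>"
  shows "cascade_run d1 0 (qop_step \<delta> q0) q0 \<xi> n = reset_run \<delta> q0 (digit \<xi>) ((n + 1) div 6)"
proof (induction n)
  case (Suc n)
  have step: "d1 (run d1 0 \<xi> n) (\<xi> n) = code_state (digit \<xi> (Suc n div 6)) (Suc n mod 6)"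
    using run_d1_coded [OF assms, of "Suc n"] by simp
  show ?case
  proof (cases "n mod 6 = 4")
    case True
    then have "Suc n mod 6 = 5" "Suc n div 6 = n div 6" "(n + 1) div 6 = n div 6"
      "(Suc n + 1) div 6 = Suc (n div 6)"
      by (simp_all add: div_Suc mod_Suc)
    moreover have "digit \<xi> (n div 6) = 0 \<or> digit \<xi> (n div 6) = 1 \<or> digit \<xi> (n div 6) = 2"
      using coded_block [OF assms] le_2_cases by blast
    ultimately show ?thesis
      using Suc.IH step by (auto simp: qop_step_def code_state_def)
  next
    case False
    then have "Suc n mod 6 \<noteq> 5" "(Suc n + 1) div 6 = (n + 1) div 6"
      using mod_less_divisor [of 6 n] by (simp_all add: div_Suc mod_Suc)
    then have "code_state (digit \<xi> (Suc n div 6)) (Suc n mod 6) \<le> 5"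
      using code_state_le_5 by simp
    then show ?thesis
      using Suc.IH step \<open>(Suc n + 1) div 6 = (n + 1) div 6\<close> by (simp add: qop_step_def)
  qed
qed simp

lemma reset_run_tail:
  assumes "reset_run \<delta> q0 \<tau> s = q0" and "\<forall>b\<ge>s. \<tau> b \<noteq> 2"
  shows "reset_run \<delta> q0 \<tau> (s + k) = run \<delta> q0 (\<lambda>j. \<tau> (s + j) = 1) k"
  using assms by (induction k) simp_all

lemma qop_finitely_many_2:
  assumes "coded \<xi>" and "finite {b. digit \<xi> b = 2}"
  obtains s where "s = 0 \<or> digit \<xi> (s - 1) = 2" and "\<forall>b\<ge>s. digit \<xi> b \<noteq> 2"
    and "qop i A \<xi> = A (\<lambda>j. digit \<xi> (s + j) = 1)"
proof (cases "\<forall>b. digit \<xi> b \<noteq> 2")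
  case True
  then show ?thesis
    using that [of 0] qop_no_2 [OF assms(1)] by simp
next
  case False
  define b0 where "b0 = Max {b. digit \<xi> b = 2}"
  have "digit \<xi> b0 = 2"
    using Max_in [OF assms(2)] False unfolding b0_def by auto
  moreover have "\<forall>b>b0. digit \<xi> b \<noteq> 2"
    using Max_ge [OF assms(2)] unfolding b0_def by (auto simp: not_le [symmetric])
  ultimately show ?thesis
    using that [of "Suc b0"] qop_last_2 [OF assms] by simp
qed

definition qop_accepts :: "nat \<Rightarrow> nat \<Rightarrow> nat set set \<Rightarrow> nat set \<Rightarrow> nat set \<Rightarrow> bool" where
  "qop_accepts i j F D S \<longleftrightarrow> (if 9 \<in> D \<or> 8 \<in> D then i = j else S \<in> F)"

lemma qop_eq_iff:
  assumes "muller_recognises Q q0 \<delta> F (A -` {j})"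
  shows "qop i A \<xi> = j \<longleftrightarrow>
    qop_accepts i j F (limit (run d1 0 \<xi>)) (limit (cascade_run d1 0 (qop_step \<delta> q0) q0 \<xi>))"
proof (cases "coded \<xi> \<and> finite {b. digit \<xi> b = 2}")
  case True
  then obtain s where s: "s = 0 \<or> digit \<xi> (s - 1) = 2" "\<forall>b\<ge>s. digit \<xi> b \<noteq> 2"
    and qop: "qop i A \<xi> = A (\<lambda>j. digit \<xi> (s + j) = 1)"
    using qop_finitely_many_2 by blast
  have "reset_run \<delta> q0 (digit \<xi>) s = q0"
    using s(1) by (cases s) auto
  have tail: "cascade_run d1 0 (qop_step \<delta> q0) q0 \<xi> n = run \<delta> q0 (\<lambda>j. digit \<xi> (s + j) = 1) ((n + 1) div 6 - s)"
    if "6 * s \<le> n" for n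
  proof -
    have "s \<le> (n + 1) div 6"
      using that by (simp add: less_eq_div_iff_mult_less_eq)
    then have "(n + 1) div 6 = s + ((n + 1) div 6 - s)"
      by simp
    then show ?thesis
      using cascade_run_qop_step [of \<xi> \<delta> q0 n] reset_run_tail [OF \<open>reset_run \<delta> q0 (digit \<xi>) s = q0\<close> s(2)] True
      by metis
  qed
  have "limit (cascade_run d1 0 (qop_step \<delta> q0) q0 \<xi>) = limit (run \<delta> q0 (\<lambda>j. digit \<xi> (s + j) = 1))"
    by (rule limit_reindex_div [of 6 "6 * s"], simp, erule tail)
  then show ?thesis
    using assms True qop limit_run_d1_coded [of \<xi>] by (simp add: muller_recognises_iff qop_accepts_def)
next
  case False
  then have "qop i A \<xi> = i" and "9 \<in> limit (run d1 0 \<xi>) \<or> 8 \<in> limit (run d1 0 \<xi>)"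
    using qop_trivial limit_run_d1_uncoded limit_run_d1_coded by blast+
  then show ?thesis
    by (auto simp: qop_accepts_def)
qed

lemma qop_step_word_or_reset:
  assumes "q0 \<in> Q"
  shows "word_or_reset Q \<delta> (qop_step \<delta> q0 d a)"
proof -
  have "qop_step \<delta> q0 d a = (if d1 d a = 6 then (\<lambda>q. \<delta> q False) else if d1 d a = 7 then (\<lambda>q. \<delta> q True)
      else if d1 d a = 8 then (\<lambda>q. q0) else (\<lambda>q. q))"
    by (simp add: fun_eq_iff qop_step_def)
  then show ?thesis
    using assms by (simp add: word_or_reset_letter word_or_reset_const word_or_reset_id)
qed

lemma qop_preimage_muller:
  assumes "muller_recognises Q q0 \<delta> F (A -` {j})"
  shows "muller_recognises (prod_encode ` ({..9} \<times> Q)) (prod_encode (0, q0)) (cascade d1 (qop_step \<delta> q0))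
    {S. qop_accepts i j F ((fst \<circ> prod_decode) ` S) ((snd \<circ> prod_decode) ` S)} (qop i A -` {j})"
proof -
  have "automaton Q q0 \<delta>"
    using assms by (simp add: muller_recognises_iff)
  then have "muller_recognises (prod_encode ` ({..9} \<times> Q)) (prod_encode (0, q0)) (cascade d1 (qop_step \<delta> q0))
    {S. qop_accepts i j F ((fst \<circ> prod_decode) ` S) ((snd \<circ> prod_decode) ` S)}
    {\<xi>. qop_accepts i j F (limit (run d1 0 \<xi>)) (limit (cascade_run d1 0 (qop_step \<delta> q0) q0 \<xi>))}"
    by (intro cascade_muller_recognises [OF d1_automaton]) (auto simp: automaton_def qop_step_def)
  moreover have "qop i A -` {j} =
      {\<xi>. qop_accepts i j F (limit (run d1 0 \<xi>)) (limit (cascade_run d1 0 (qop_step \<delta> q0) q0 \<xi>))}"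
    using qop_eq_iff [OF assms] by auto
  ultimately show ?thesis
    by simp
qed

lemma qop_aperiodic:
  assumes "automaton Q q0 \<delta>" and "aperiodic_trans Q \<delta>"
  shows "aperiodic_trans (prod_encode ` ({..9} \<times> Q)) (cascade d1 (qop_step \<delta> q0))"
  using assms(1) d1_automaton
  by (intro aperiodic_cascade [OF _ d1.aperiodic _ assms(2)]) (auto simp: automaton_def qop_step_word_or_reset)

lemma qop_preimage:
  assumes "muller_recognises Q q0 \<delta> F (A -` {j})"
  obtains Q' q0' \<delta>' F' where "muller_recognises Q' q0' \<delta>' F' (qop i A -` {j})"
    and "aperiodic_trans Q \<delta> \<Longrightarrow> aperiodic_trans Q' \<delta>'"
proof -
  have "automaton Q q0 \<delta>"
    using assms by (simp add: muller_recognises_iff)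
  then show ?thesis
    by (intro that [OF qop_preimage_muller [OF assms]] qop_aperiodic)
qed

section \<open>The coding g and the operation \<open>\<cdot>\<close>\<close>

text \<open>\<open>g_pattern r\<close> is the letter at position \<open>r\<close> of \<open>tl6 x @ tl6 2\<close>, except at position \<open>3\<close>,
  which carries the encoded letter \<open>x\<close>.\<close>

definition g_pattern :: "nat \<Rightarrow> bool" where
  "g_pattern r = [True, True, False, False, False, False, True, True, False, False, True, False] ! r"

definition d2 :: "nat \<Rightarrow> bool \<Rightarrow> nat" where
  "d2 s a = (if s = 12 then 12 else if s = 3 then 4 else
     if a = g_pattern s then (if s = 11 then 0 else Suc s) else 12)"

interpretation d2: cyclic_automaton d2 12 12 "\<lambda>q. q" 1
proof
  fix q q' s :: nat and a :: bool
  show "d2 12 a = 12" "q \<le> 12 \<Longrightarrow> d2 q a \<le> 12" "q < 12 \<Longrightarrow> q < 12"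
    by (simp_all add: d2_def)
  show "q < 12 \<Longrightarrow> d2 q a \<noteq> 12 \<Longrightarrow> d2 q a = Suc q mod 12"
    by (auto simp: d2_def split: if_splits)
  show "q = 0 \<Longrightarrow> q' = 0 \<Longrightarrow> q = q'"
    by simp
  have "\<forall>s\<in>set [1..<12]. \<exists>j\<in>set [0..<12]. j \<noteq> 3 \<and> (j + s) mod 12 \<noteq> 3 \<and> g_pattern j \<noteq> g_pattern ((j + s) mod 12)"
    by code_simp
  moreover assume "0 < s" "s < 12"
  ultimately obtain j where j: "j < 12" "j \<noteq> 3" "(j + s) mod 12 \<noteq> 3" "g_pattern j \<noteq> g_pattern ((j + s) mod 12)"
    by fastforce
  have reads: "a = g_pattern q" if "d2 q a \<noteq> 12" "q < 12" "q \<noteq> 3" for q a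
    using that by (auto simp: d2_def split: if_splits)
  have "(j + s) mod 12 < 12"
    by simp
  then have "foldl d2 j v = 12 \<or> foldl d2 ((j + s) mod 12) v = 12" if len: "length v = 1" for v
  proof -
    obtain a where "v = [a]"
      using len by (auto simp: length_Suc_conv)
    then show ?thesis
      using j reads [of j a] reads [of "(j + s) mod 12" a] \<open>(j + s) mod 12 < 12\<close> by auto
  qed
  with j show "\<exists>j<12. \<forall>q q' v. q < 12 \<longrightarrow> q' < 12 \<longrightarrow> q = j \<longrightarrow> q' = (j + s) mod 12 \<longrightarrow>
      length v = 1 \<longrightarrow> foldl d2 q v = 12 \<or> foldl d2 q' v = 12"
    by blast
qed

lemma d2_automaton: "automaton {..12} 0 d2"
  unfolding automaton_def using d2.closed by auto

lemma less_12_cases: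
  "(r::nat) < 12 \<Longrightarrow> r = 0 \<or> r = 1 \<or> r = 2 \<or> r = 3 \<or> r = 4 \<or> r = 5 \<or> r = 6 \<or> r = 7 \<or> r = 8 \<or> r = 9 \<or> r = 10 \<or> r = 11"
  by (simp add: numeral_eq_Suc less_Suc_eq)

lemma genc_nth: "genc \<eta> n = (if n mod 12 = 3 then \<eta> (n div 12) else g_pattern (n mod 12))"
proof -
  have "tl6 (if r < 6 then bit b else 2) ! (r mod 6) = (if r = 3 then b else g_pattern r)" if "r < 12" for r b
    using less_12_cases [OF that] by (cases b) (auto simp: tl6_def g_pattern_def bit_def)
  moreover have "n mod 12 mod 6 = n mod 6"
    by (simp add: mod_mod_cancel)
  ultimately show ?thesis
    unfolding genc_def by (metis mod_less_divisor zero_less_numeral)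
qed

definition g_prefix :: "bool word \<Rightarrow> nat \<Rightarrow> bool" where
  "g_prefix \<xi> n \<longleftrightarrow> (\<forall>i<n. i mod 12 \<noteq> 3 \<longrightarrow> \<xi> i = g_pattern (i mod 12))"

lemma g_prefix_Suc: "g_prefix \<xi> (Suc n) \<longleftrightarrow> g_prefix \<xi> n \<and> (n mod 12 \<noteq> 3 \<longrightarrow> \<xi> n = g_pattern (n mod 12))"
  unfolding g_prefix_def by (auto simp: less_Suc_eq)

lemma genc_inverse: "\<xi> = genc \<eta> \<Longrightarrow> \<eta> = (\<lambda>b. \<xi> (12 * b + 3))"
  by (simp add: fun_eq_iff genc_nth)

lemma range_genc: "(\<exists>\<eta>. \<xi> = genc \<eta>) \<longleftrightarrow> (\<forall>n. g_prefix \<xi> n)"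
proof
  assume prefix: "\<forall>n. g_prefix \<xi> n"
  have "\<xi> n = genc (\<lambda>b. \<xi> (12 * b + 3)) n" for n
  proof (cases "n mod 12 = 3")
    case True
    then have "12 * (n div 12) + 3 = n"
      using mult_div_mod_eq [of 12 n] by simp
    then show ?thesis
      using True by (simp add: genc_nth)
  next
    case False
    then show ?thesis
      using prefix [rule_format, of "Suc n"] by (simp add: genc_nth g_prefix_def)
  qed
  then show "\<exists>\<eta>. \<xi> = genc \<eta>"
    by blast
qed (auto simp: g_prefix_def genc_nth)

lemma nonext_iff: "nonext p \<longleftrightarrow> (\<exists>i<length p. i mod 12 \<noteq> 3 \<and> p ! i \<noteq> g_pattern (i mod 12))"
proof
  assume "\<exists>i<length p. i mod 12 \<noteq> 3 \<and> p ! i \<noteq> g_pattern (i mod 12)"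
  then obtain i where "i < length p" "i mod 12 \<noteq> 3" "p ! i \<noteq> g_pattern (i mod 12)"
    by blast
  then show "nonext p"
    unfolding nonext_def by (auto simp: genc_nth dest: arg_cong [of _ _ "\<lambda>s. s ! i"])
next
  assume "nonext p"
  show "\<exists>i<length p. i mod 12 \<noteq> 3 \<and> p ! i \<noteq> g_pattern (i mod 12)"
  proof (rule ccontr)
    assume "\<not> ?thesis"
    then have agree: "\<forall>i<length p. i mod 12 \<noteq> 3 \<longrightarrow> p ! i = g_pattern (i mod 12)"
      by blast
    define \<eta> where "\<eta> b = (12 * b + 3 < length p \<and> p ! (12 * b + 3))" for b
    have "genc \<eta> [0 \<rightarrow> length p] = p"
    proof (rule nth_equalityI)
      fix i
      assume "i < length (genc \<eta> [0 \<rightarrow> length p])"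
      then have "i < length p"
        by simp
      moreover have "i mod 12 = 3 \<Longrightarrow> 12 * (i div 12) + 3 = i"
        using mult_div_mod_eq [of 12 i] by simp
      ultimately show "genc \<eta> [0 \<rightarrow> length p] ! i = p ! i"
        using agree by (auto simp: genc_nth \<eta>_def)
    qed simp
    then show False
      using \<open>nonext p\<close> unfolding nonext_def by blast
  qed
qed

lemma run_d2: "run d2 0 \<xi> n = (if g_prefix \<xi> n then n mod 12 else 12)"
proof (induction n)
  case (Suc n)
  have "n mod 12 < 12"
    by simp
  then show ?case
    using Suc by (auto simp: g_prefix_Suc d2_def mod_Suc)
qed (simp add: g_prefix_def)

lemma length_genc_list: "length (genc_list u) = 12 * length u"
  by (induction u) (simp_all add: genc_list_def)

lemma nth_genc_list:
  "i < length (genc_list u) \<Longrightarrow> i mod 12 \<noteq> 3 \<Longrightarrow> genc_list u ! i = g_pattern (i mod 12)"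
proof (induction u arbitrary: i)
  case (Cons x u)
  have "genc_list (x # u) = (tl6 (bit x) @ tl6 2) @ genc_list u"
    by (simp add: genc_list_def)
  moreover have "(tl6 (bit x) @ tl6 2) ! i = g_pattern i" if "i < 12" "i \<noteq> 3"
    using that by (cases x) (auto simp: less_Suc_eq numeral_eq_Suc tl6_def g_pattern_def bit_def nth_append)
  ultimately show ?case
    using Cons.IH [of "i - 12"] Cons.prems by (auto simp: nth_append length_genc_list le_mod_geq)
qed (simp add: genc_list_def)

lemma dot_genc:
  assumes "\<exists>\<eta>. \<xi> = genc \<eta>"
  shows "dot A B \<xi> = A (\<lambda>b. \<xi> (12 * b + 3))"
proof -
  have "(THE \<eta>. \<xi> = genc \<eta>) = (\<lambda>b. \<xi> (12 * b + 3))"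
    using assms genc_inverse by (intro the_equality) auto
  then show ?thesis
    using assms by (simp add: dot_def)
qed

definition first_deviation :: "bool word \<Rightarrow> nat" where
  "first_deviation \<xi> = (LEAST i. i mod 12 \<noteq> 3 \<and> \<xi> i \<noteq> g_pattern (i mod 12))"

lemma first_deviation:
  assumes "\<nexists>\<eta>. \<xi> = genc \<eta>"
  shows "first_deviation \<xi> mod 12 \<noteq> 3" and "\<xi> (first_deviation \<xi>) \<noteq> g_pattern (first_deviation \<xi> mod 12)"
    and "g_prefix \<xi> (first_deviation \<xi>)"
proof -
  have "\<exists>i. i mod 12 \<noteq> 3 \<and> \<xi> i \<noteq> g_pattern (i mod 12)"
    using assms range_genc unfolding g_prefix_def by blast
  then have "first_deviation \<xi> mod 12 \<noteq> 3 \<and> \<xi> (first_deviation \<xi>) \<noteq> g_pattern (first_deviation \<xi> mod 12)"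
    unfolding first_deviation_def by (rule LeastI_ex)
  then show "first_deviation \<xi> mod 12 \<noteq> 3" and "\<xi> (first_deviation \<xi>) \<noteq> g_pattern (first_deviation \<xi> mod 12)"
    by simp_all
  show "g_prefix \<xi> (first_deviation \<xi>)"
    unfolding g_prefix_def first_deviation_def using not_less_Least by blast
qed

lemma g_prefix_iff_le_first_deviation:
  assumes "\<nexists>\<eta>. \<xi> = genc \<eta>"
  shows "g_prefix \<xi> n \<longleftrightarrow> n \<le> first_deviation \<xi>"
proof
  assume "g_prefix \<xi> n"
  show "n \<le> first_deviation \<xi>"
  proof (rule ccontr)
    assume "\<not> n \<le> first_deviation \<xi>"
    then show False
      using \<open>g_prefix \<xi> n\<close> first_deviation(1,2) [OF assms] unfolding g_prefix_def by simp
  qed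
next
  assume "n \<le> first_deviation \<xi>"
  then show "g_prefix \<xi> n"
    using first_deviation(3) [OF assms] unfolding g_prefix_def by simp
qed

lemma dot_suffix_unique:
  assumes "\<nexists>\<eta>. \<xi> = genc \<eta>" and \<xi>: "\<xi> = (genc_list u @ v) \<frown> \<eta>" and "nonext (genc_list u @ v)"
    and minimal: "\<forall>j. 0 < j \<and> j < length v \<longrightarrow> \<not> nonext (genc_list u @ take j v)"
  shows "\<eta> = suffix (Suc (first_deviation \<xi>)) \<xi>"
proof -
  let ?n = "first_deviation \<xi>"
  note deviation = first_deviation [OF assms(1)]
  define p where "p = genc_list u @ v"
  have \<xi>_p: "\<xi> i = p ! i" if "i < length p" for i
    using \<xi> that unfolding p_def by simp
  obtain i where i: "i < length p" "i mod 12 \<noteq> 3" "p ! i \<noteq> g_pattern (i mod 12)"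
    using \<open>nonext (genc_list u @ v)\<close> unfolding nonext_iff p_def by blast
  have "?n \<le> i"
  proof (rule ccontr)
    assume "\<not> ?n \<le> i"
    then have "\<xi> i = g_pattern (i mod 12)"
      using deviation(3) i(2) unfolding g_prefix_def by simp
    then show False
      using i \<xi>_p [OF i(1)] by simp
  qed
  then have "?n < length p"
    using i(1) by simp
  have "length (genc_list u) \<le> ?n"
  proof (rule ccontr)
    assume "\<not> length (genc_list u) \<le> ?n"
    then have "p ! ?n = g_pattern (?n mod 12)"
      using nth_genc_list [of ?n u] deviation(1) by (simp add: p_def nth_append)
    then show False
      using \<xi>_p [OF \<open>?n < length p\<close>] deviation(2) by simp
  qed
  have "length p = Suc ?n"
  proof (rule ccontr)
    assume "length p \<noteq> Suc ?n"
    then have "Suc ?n < length p"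
      using \<open>?n < length p\<close> by simp
    define j where "j = Suc ?n - length (genc_list u)"
    have "0 < j" "j < length v"
      using \<open>length (genc_list u) \<le> ?n\<close> \<open>Suc ?n < length p\<close> by (simp_all add: j_def p_def)
    moreover have "genc_list u @ take j v = take (Suc ?n) p"
      using \<open>length (genc_list u) \<le> ?n\<close> by (simp add: j_def p_def)
    moreover have "nonext (take (Suc ?n) p)"
      unfolding nonext_iff using \<open>Suc ?n < length p\<close> deviation(1,2) \<xi>_p [OF \<open>?n < length p\<close>]
      by (intro exI [of _ ?n]) simp
    ultimately show False
      using minimal [rule_format, of j] by simp
  qed
  then show ?thesis
    using \<xi> unfolding p_def by simp
qed

lemma dot_not_genc:
  assumes "\<nexists>\<eta>. \<xi> = genc \<eta>"
  shows "dot A B \<xi> = B (suffix (Suc (first_deviation \<xi>)) \<xi>)"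
proof -
  let ?n = "first_deviation \<xi>"
  note deviation = first_deviation [OF assms]
  have "(THE \<eta>. \<exists>u v. \<xi> = (genc_list u @ v) \<frown> \<eta> \<and> v \<noteq> [] \<and> nonext (genc_list u @ v) \<and>
      (\<forall>j. 0 < j \<and> j < length v \<longrightarrow> \<not> nonext (genc_list u @ take j v))) = suffix (Suc ?n) \<xi>"
  proof (rule the_equality)
    let ?v = "\<xi> [0 \<rightarrow> Suc ?n]"
    have "genc_list [] = []"
      by (simp add: genc_list_def)
    moreover have "\<xi> = ?v \<frown> suffix (Suc ?n) \<xi>"
      by (rule prefix_suffix)
    moreover have "nonext ?v"
      unfolding nonext_iff using deviation(1,2) by (intro exI [of _ ?n]) (simp add: nth_append)
    moreover have "\<not> nonext (take j ?v)" if "j < Suc ?n" for j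
    proof
      assume "nonext (take j ?v)"
      then obtain i where i: "i < length (take j ?v)" "i mod 12 \<noteq> 3" "take j ?v ! i \<noteq> g_pattern (i mod 12)"
        unfolding nonext_iff by blast
      then have "i < j" "\<xi> i \<noteq> g_pattern (i mod 12)"
        using that by (simp_all del: subseq_to_Suc)
      then show False
        using deviation(3) i(2) that unfolding g_prefix_def by simp
    qed
    ultimately show "\<exists>u v. \<xi> = (genc_list u @ v) \<frown> suffix (Suc ?n) \<xi> \<and> v \<noteq> [] \<and> nonext (genc_list u @ v) \<and>
        (\<forall>j. 0 < j \<and> j < length v \<longrightarrow> \<not> nonext (genc_list u @ take j v))"
      by (intro exI [of _ "[]"] exI [of _ ?v]) simp
  next
    fix \<eta>
    assume "\<exists>u v. \<xi> = (genc_list u @ v) \<frown> \<eta> \<and> v \<noteq> [] \<and> nonext (genc_list u @ v) \<and>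
      (\<forall>j. 0 < j \<and> j < length v \<longrightarrow> \<not> nonext (genc_list u @ take j v))"
    then show "\<eta> = suffix (Suc ?n) \<xi>"
      using dot_suffix_unique [OF assms] by blast
  qed
  then show ?thesis
    using assms by (simp add: dot_def)
qed

text \<open>The automaton for \<open>A \<cdot> B\<close> runs \<open>d2\<close>, feeds the letters at positions \<open>12 b + 3\<close> to the automaton
  for \<open>A\<close>, and, once \<open>d2\<close> has left the range of \<open>g\<close>, runs the automaton for \<open>B\<close> on the rest of the input.\<close>

definition dot_step_A :: "(nat \<Rightarrow> bool \<Rightarrow> nat) \<Rightarrow> nat \<Rightarrow> bool \<Rightarrow> nat \<Rightarrow> nat" where
  "dot_step_A \<delta> d a q = (if d = 3 then \<delta> q a else q)"

definition dot_step_B :: "(nat \<Rightarrow> bool \<Rightarrow> nat) \<Rightarrow> nat \<Rightarrow> nat \<Rightarrow> bool \<Rightarrow> nat \<Rightarrow> nat" where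
  "dot_step_B \<delta> q0 c a q =
    (if fst (prod_decode c) = 12 then \<delta> q a else if d2 (fst (prod_decode c)) a = 12 then q0 else q)"

definition dot_accepts :: "nat set set \<Rightarrow> nat set set \<Rightarrow> nat set \<Rightarrow> nat set \<Rightarrow> bool" where
  "dot_accepts FA FB X Y \<longleftrightarrow>
    (if 12 \<in> (fst \<circ> prod_decode) ` X then Y \<in> FB else (snd \<circ> prod_decode) ` X \<in> FA)"

lemma automaton_dot_step_A:
  "automaton Q q0 \<delta> \<Longrightarrow> automaton (prod_encode ` ({..12} \<times> Q)) (prod_encode (0, q0)) (cascade d2 (dot_step_A \<delta>))"
  by (rule automaton_cascade [OF d2_automaton]) (auto simp: automaton_def dot_step_A_def)

lemma cascade_run_dot_step_A:
  assumes "\<forall>n. g_prefix \<xi> n"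
  shows "cascade_run d2 0 (dot_step_A \<delta>) q0 \<xi> n = run \<delta> q0 (\<lambda>b. \<xi> (12 * b + 3)) ((n + 8) div 12)"
proof (induction n)
  case (Suc n)
  have "run d2 0 \<xi> n = n mod 12"
    using assms by (simp add: run_d2)
  show ?case
  proof (cases "n mod 12 = 3")
    case True
    then have "(n + 8) div 12 = n div 12" "(Suc n + 8) div 12 = Suc (n div 12)" "12 * (n div 12) + 3 = n"
      using div_add1_eq [of n 8 12] div_add1_eq [of n 9 12] mult_div_mod_eq [of 12 n] by simp_all
    then show ?thesis
      using Suc.IH \<open>run d2 0 \<xi> n = n mod 12\<close> True by (simp add: dot_step_A_def)
  next
    case False
    then have "(n mod 12 + 9) div 12 = (n mod 12 + 8) div 12"
      using less_12_cases [of "n mod 12"] by auto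
    moreover have "(n + 9) div 12 = n div 12 + (n mod 12 + 9) div 12"
      "(n + 8) div 12 = n div 12 + (n mod 12 + 8) div 12"
      by (simp_all add: div_add1_eq [of n 9 12] div_add1_eq [of n 8 12])
    ultimately have "(Suc n + 8) div 12 = (n + 8) div 12"
      by (simp add: add.commute)
    then show ?thesis
      using Suc.IH \<open>run d2 0 \<xi> n = n mod 12\<close> False by (simp add: dot_step_A_def)
  qed
qed simp

lemma run_d2_not_genc:
  assumes "\<nexists>\<eta>. \<xi> = genc \<eta>"
  shows "run d2 0 \<xi> m = (if m \<le> first_deviation \<xi> then m mod 12 else 12)"
  using g_prefix_iff_le_first_deviation [OF assms] by (simp add: run_d2)

lemma limit_cascade_run_dot_step_B:
  assumes "\<nexists>\<eta>. \<xi> = genc \<eta>"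
  shows "limit (cascade_run (cascade d2 (dot_step_A \<delta>A)) (prod_encode (0, q0A)) (dot_step_B \<delta>B q0B) q0B \<xi>) =
    limit (run \<delta>B q0B (suffix (Suc (first_deviation \<xi>)) \<xi>))"
proof -
  let ?C = "cascade d2 (dot_step_A \<delta>A)" and ?c0 = "prod_encode (0, q0A)" and ?n = "first_deviation \<xi>"
  note d2_run = run_d2_not_genc [OF assms]
  have fst_run: "fst (prod_decode (run ?C ?c0 \<xi> m)) = run d2 0 \<xi> m" for m
    by (simp add: run_cascade)
  have tail: "cascade_run ?C ?c0 (dot_step_B \<delta>B q0B) q0B \<xi> (Suc ?n + k) = run \<delta>B q0B (suffix (Suc ?n) \<xi>) k" for k
  proof (induction k)
    case 0
    have "run d2 0 \<xi> ?n \<noteq> 12" "d2 (run d2 0 \<xi> ?n) (\<xi> ?n) = 12"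
      using d2_run [of ?n] d2_run [of "Suc ?n"] by simp_all
    then show ?case
      by (simp add: dot_step_B_def fst_run)
  next
    case (Suc k)
    let ?m = "Suc ?n + k"
    have "fst (prod_decode (run ?C ?c0 \<xi> ?m)) = 12"
      using d2_run [of ?m] fst_run [of ?m] by (simp del: run_Suc)
    then have "cascade_run ?C ?c0 (dot_step_B \<delta>B q0B) q0B \<xi> (Suc ?m) =
        \<delta>B (cascade_run ?C ?c0 (dot_step_B \<delta>B q0B) q0B \<xi> ?m) (\<xi> ?m)"
      by (simp add: dot_step_B_def del: run_Suc)
    then show ?case
      using Suc.IH by simp
  qed
  have "cascade_run ?C ?c0 (dot_step_B \<delta>B q0B) q0B \<xi> m = run \<delta>B q0B (suffix (Suc ?n) \<xi>) (m - Suc ?n)"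
    if "Suc ?n \<le> m" for m
    using tail [of "m - Suc ?n"] that by simp
  then show ?thesis
    by (intro limit_reindex_div [of 1 "Suc ?n" _ _ 0 "Suc ?n"]) simp_all
qed

lemma dot_eq_iff:
  assumes A: "muller_recognises QA q0A \<delta>A FA (A -` {j})" and B: "muller_recognises QB q0B \<delta>B FB (B -` {j})"
  shows "dot A B \<xi> = j \<longleftrightarrow> dot_accepts FA FB (limit (run (cascade d2 (dot_step_A \<delta>A)) (prod_encode (0, q0A)) \<xi>))
    (limit (cascade_run (cascade d2 (dot_step_A \<delta>A)) (prod_encode (0, q0A)) (dot_step_B \<delta>B q0B) q0B \<xi>))"
proof -
  let ?C = "cascade d2 (dot_step_A \<delta>A)" and ?c0 = "prod_encode (0, q0A)"
  have "automaton (prod_encode ` ({..12} \<times> QA)) ?c0 ?C"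
    using A by (intro automaton_dot_step_A) (simp add: muller_recognises_iff)
  note components = limit_run_cascade [OF this, of \<xi>]
  show ?thesis
  proof (cases "\<exists>\<eta>. \<xi> = genc \<eta>")
    case True
    then have prefix: "\<forall>n. g_prefix \<xi> n"
      by (simp add: range_genc)
    then have "run d2 0 \<xi> -` {12} = {}"
      by (auto simp: run_d2)
    then have "12 \<notin> limit (run d2 0 \<xi>)"
      by (simp add: limit_vimage)
    moreover have "limit (cascade_run d2 0 (dot_step_A \<delta>A) q0A \<xi>) = limit (run \<delta>A q0A (\<lambda>b. \<xi> (12 * b + 3)))"
      by (rule limit_reindex_div [of 12 0 _ _ 8 0]) (simp_all add: cascade_run_dot_step_A [OF prefix])
    ultimately show ?thesis
      using components A dot_genc [OF True] by (simp add: dot_accepts_def muller_recognises_iff)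
  next
    case False
    have "run d2 0 \<xi> (max m (Suc (first_deviation \<xi>))) = 12" for m
      by (simp add: run_d2_not_genc [OF False])
    then have "\<forall>m. \<exists>k\<ge>m. run d2 0 \<xi> k = 12"
      by (metis max.cobounded1)
    then have "12 \<in> limit (run d2 0 \<xi>)"
      by (simp add: limit_iff_frequent INFM_nat_le)
    moreover note limit_cascade_run_dot_step_B [OF False]
    ultimately show ?thesis
      using components B dot_not_genc [OF False] by (simp add: dot_accepts_def muller_recognises_iff)
  qed
qed

lemma dot_step_A_word_or_reset: "word_or_reset Q \<delta> (dot_step_A \<delta> d a)"
proof -
  have "dot_step_A \<delta> d a = (if d = 3 then (\<lambda>q. \<delta> q a) else (\<lambda>q. q))"
    by (simp add: fun_eq_iff dot_step_A_def)
  then show ?thesis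
    by (simp add: word_or_reset_letter word_or_reset_id)
qed

lemma dot_step_B_word_or_reset:
  assumes "q0 \<in> Q"
  shows "word_or_reset Q \<delta> (dot_step_B \<delta> q0 c a)"
proof -
  have "dot_step_B \<delta> q0 c a = (if fst (prod_decode c) = 12 then (\<lambda>q. \<delta> q a)
      else if d2 (fst (prod_decode c)) a = 12 then (\<lambda>q. q0) else (\<lambda>q. q))"
    by (simp add: fun_eq_iff dot_step_B_def)
  then show ?thesis
    using assms by (simp add: word_or_reset_letter word_or_reset_const word_or_reset_id)
qed

lemma dot_preimage_muller:
  assumes A: "muller_recognises QA q0A \<delta>A FA (A -` {j})" and B: "muller_recognises QB q0B \<delta>B FB (B -` {j})"
  shows "muller_recognises (prod_encode ` (prod_encode ` ({..12} \<times> QA) \<times> QB)) (prod_encode (prod_encode (0, q0A), q0B))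
    (cascade (cascade d2 (dot_step_A \<delta>A)) (dot_step_B \<delta>B q0B))
    {S. dot_accepts FA FB ((fst \<circ> prod_decode) ` S) ((snd \<circ> prod_decode) ` S)} (dot A B -` {j})"
proof -
  have "automaton QA q0A \<delta>A" "automaton QB q0B \<delta>B"
    using A B by (simp_all add: muller_recognises_iff)
  then have "muller_recognises (prod_encode ` (prod_encode ` ({..12} \<times> QA) \<times> QB)) (prod_encode (prod_encode (0, q0A), q0B))
    (cascade (cascade d2 (dot_step_A \<delta>A)) (dot_step_B \<delta>B q0B))
    {S. dot_accepts FA FB ((fst \<circ> prod_decode) ` S) ((snd \<circ> prod_decode) ` S)}
    {\<xi>. dot_accepts FA FB (limit (run (cascade d2 (dot_step_A \<delta>A)) (prod_encode (0, q0A)) \<xi>))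
      (limit (cascade_run (cascade d2 (dot_step_A \<delta>A)) (prod_encode (0, q0A)) (dot_step_B \<delta>B q0B) q0B \<xi>))}"
    by (intro cascade_muller_recognises automaton_dot_step_A) (auto simp: automaton_def dot_step_B_def)
  moreover have "dot A B -` {j} =
    {\<xi>. dot_accepts FA FB (limit (run (cascade d2 (dot_step_A \<delta>A)) (prod_encode (0, q0A)) \<xi>))
      (limit (cascade_run (cascade d2 (dot_step_A \<delta>A)) (prod_encode (0, q0A)) (dot_step_B \<delta>B q0B) q0B \<xi>))}"
    using dot_eq_iff [OF A B] by auto
  ultimately show ?thesis
    by simp
qed

lemma dot_aperiodic:
  assumes "automaton QA q0A \<delta>A" "aperiodic_trans QA \<delta>A" and "automaton QB q0B \<delta>B" "aperiodic_trans QB \<delta>B"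
  shows "aperiodic_trans (prod_encode ` (prod_encode ` ({..12} \<times> QA) \<times> QB))
    (cascade (cascade d2 (dot_step_A \<delta>A)) (dot_step_B \<delta>B q0B))"
proof (rule aperiodic_cascade [OF _ _ _ assms(4)])
  show "aperiodic_trans (prod_encode ` ({..12} \<times> QA)) (cascade d2 (dot_step_A \<delta>A))"
    using assms(1) d2_automaton
    by (intro aperiodic_cascade [OF _ d2.aperiodic _ assms(2)]) (auto simp: automaton_def dot_step_A_word_or_reset)
  show "\<forall>d\<in>prod_encode ` ({..12} \<times> QA). \<forall>a. cascade d2 (dot_step_A \<delta>A) d a \<in> prod_encode ` ({..12} \<times> QA)"
    using automaton_dot_step_A [OF assms(1)] by (simp add: automaton_def)
qed (use assms(3) in \<open>auto simp: automaton_def dot_step_B_word_or_reset\<close>)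

lemma dot_preimage:
  assumes "muller_recognises QA q0A \<delta>A FA (A -` {j})" and "muller_recognises QB q0B \<delta>B FB (B -` {j})"
  obtains Q' q0' \<delta>' F' where "muller_recognises Q' q0' \<delta>' F' (dot A B -` {j})"
    and "aperiodic_trans QA \<delta>A \<Longrightarrow> aperiodic_trans QB \<delta>B \<Longrightarrow> aperiodic_trans Q' \<delta>'"
proof -
  have "automaton QA q0A \<delta>A" "automaton QB q0B \<delta>B"
    using assms by (simp_all add: muller_recognises_iff)
  then show ?thesis
    by (intro that [OF dot_preimage_muller [OF assms]] dot_aperiodic)
qed

lemma qop_cases: "qop i A \<xi> = i \<or> (\<exists>\<eta>. qop i A \<xi> = A \<eta>)"
  unfolding qop_def by auto

lemma dot_cases: "(\<exists>\<eta>. dot A B \<xi> = A \<eta>) \<or> (\<exists>\<eta>. dot A B \<xi> = B \<eta>)"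
  unfolding dot_def by auto

lemma qop_Rk:
  assumes "A \<in> Rk k" and "i < k"
  shows "qop i A \<in> Rk k"
proof -
  have "regular_omega (qop i A -` {j})" if j: "j < k" for j
  proof -
    obtain Q q0 \<delta> F where "muller_recognises Q q0 \<delta> F (A -` {j})"
      using assms(1) j by (auto simp: Rk_def regular_omega_def)
    then obtain Q' q0' \<delta>' F' where "muller_recognises Q' q0' \<delta>' F' (qop i A -` {j})"
      by (rule qop_preimage)
    then show ?thesis
      unfolding regular_omega_def by blast
  qed
  moreover have "qop i A \<xi> < k" for \<xi>
    using assms qop_cases [of i A \<xi>] by (auto simp: Rk_def)
  ultimately show ?thesis
    by (simp add: Rk_def)
qed

lemma qop_Ak:
  assumes "A \<in> Ak k" and "i < k"
  shows "qop i A \<in> Ak k"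
proof -
  have "aperiodic_omega (qop i A -` {j})" if j: "j < k" for j
  proof -
    obtain Q q0 \<delta> F where "muller_recognises Q q0 \<delta> F (A -` {j})" and "aperiodic_trans Q \<delta>"
      using assms(1) j by (auto simp: Ak_def aperiodic_omega_def)
    moreover obtain Q' q0' \<delta>' F' where "muller_recognises Q' q0' \<delta>' F' (qop i A -` {j})"
      and "aperiodic_trans Q \<delta> \<Longrightarrow> aperiodic_trans Q' \<delta>'"
      using qop_preimage [OF calculation(1), where i = i] by blast
    ultimately show ?thesis
      unfolding aperiodic_omega_def by blast
  qed
  moreover have "qop i A \<xi> < k" for \<xi>
    using assms qop_cases [of i A \<xi>] by (auto simp: Ak_def)
  ultimately show ?thesis
    by (simp add: Ak_def)
qed

lemma dot_Rk:
  assumes "A \<in> Rk k" and "B \<in> Rk k"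
  shows "dot A B \<in> Rk k"
proof -
  have "regular_omega (dot A B -` {j})" if j: "j < k" for j
  proof -
    obtain QA q0A \<delta>A FA where "muller_recognises QA q0A \<delta>A FA (A -` {j})"
      using assms(1) j by (auto simp: Rk_def regular_omega_def)
    moreover obtain QB q0B \<delta>B FB where "muller_recognises QB q0B \<delta>B FB (B -` {j})"
      using assms(2) j by (auto simp: Rk_def regular_omega_def)
    ultimately obtain Q' q0' \<delta>' F' where "muller_recognises Q' q0' \<delta>' F' (dot A B -` {j})"
      by (rule dot_preimage)
    then show ?thesis
      unfolding regular_omega_def by blast
  qed
  moreover have "dot A B \<xi> < k" for \<xi>
    using assms dot_cases [of A B \<xi>] by (auto simp: Rk_def)
  ultimately show ?thesis
    by (simp add: Rk_def)
qed

lemma dot_Ak: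
  assumes "A \<in> Ak k" and "B \<in> Ak k"
  shows "dot A B \<in> Ak k"
proof -
  have "aperiodic_omega (dot A B -` {j})" if j: "j < k" for j
  proof -
    obtain QA q0A \<delta>A FA where "muller_recognises QA q0A \<delta>A FA (A -` {j})" "aperiodic_trans QA \<delta>A"
      using assms(1) j by (auto simp: Ak_def aperiodic_omega_def)
    moreover obtain QB q0B \<delta>B FB where "muller_recognises QB q0B \<delta>B FB (B -` {j})" "aperiodic_trans QB \<delta>B"
      using assms(2) j by (auto simp: Ak_def aperiodic_omega_def)
    moreover obtain Q' q0' \<delta>' F' where "muller_recognises Q' q0' \<delta>' F' (dot A B -` {j})"
      and "aperiodic_trans QA \<delta>A \<Longrightarrow> aperiodic_trans QB \<delta>B \<Longrightarrow> aperiodic_trans Q' \<delta>'"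
      using dot_preimage [OF calculation(1,3)] by blast
    ultimately show ?thesis
      unfolding aperiodic_omega_def by blast
  qed
  moreover have "dot A B \<xi> < k" for \<xi>
    using assms dot_cases [of A B \<xi>] by (auto simp: Ak_def)
  ultimately show ?thesis
    by (simp add: Ak_def)
qed

theorem lemma4p2:
  fixes k :: nat
  assumes "k \<ge> 2"
  shows "(\<forall>A\<in>Ak k. \<forall>i<k. qop i A \<in> Ak k) \<and> (\<forall>A\<in>Ak k. \<forall>B\<in>Ak k. dot A B \<in> Ak k) \<and>
         (\<forall>A\<in>Rk k. \<forall>i<k. qop i A \<in> Rk k) \<and> (\<forall>A\<in>Rk k. \<forall>B\<in>Rk k. dot A B \<in> Rk k)"
  by (simp add: qop_Ak dot_Ak qop_Rk dot_Rk)

end
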